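(* Assume Case 3 holds. Let $(C,D)=(n_2,m_2)$ and for $n\ge1$ put $$(C_n,D_n)=(\gamma_n-(\gamma-C)d^{n-1},\ Dd^{n-1}),\qquad (C_n^*,D_n^* )=\big((\delta^{n-1}+\delta^{n-2}D+\cdots+\delta D^{n-2}+D^{n-1})C,\ D^n\big).$$ (i) If $\delta>T_1$, then for every $n\ge1$, $(C_n,D_n)$ is the vertex of $N(Q^n)$ immediately following $(\gamma_n,d^n)$ (in order of increasing $x$-coordinate), the segment joining them has slope $-l_2^{-1}$, and $\delta^n$ is strictly bigger than the $y$-intercept of the line through $(\gamma_n,d^n)$ and $(C_n,D_n)$. (ii) If $\delta=T_1$ and $m_2>0$, then for every $n\ge1$, $(C_n^*,D_n^* )$ is the vertex of $N(Q^n)$ immediately following $(\gamma_n,d^n)$, the segment joining them has slope $-l_2^{-1}$, and $\delta^n$ equals the $y$-intercept of the line through $(\gamma_n,d^n)$ and $(C_n^*,D_n^* )$.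
   Context: Let $f(z,w)=(p(z),q(z,w))$ be a holomorphic skew product germ at the origin of $\mathbb{C}^2$ with $f(0,0)=(0,0)$, where $p(z)=a_\delta z^\delta+O(z^{\delta+1})$ with $a_\delta\neq0$ and integer $\delta\ge1$, and $q(z,w)=\sum_{i+j\ge1}b_{ij}z^iw^j$ is not identically zero. For $n\ge1$ write $f^n=(p^n,Q^n)$. The Newton polygon $N(g)$ of a nonzero germ $g=\sum g_{ij}z^iw^j$ is the convex hull of $\bigcup_{g_{ij}\neq0}\{(x,y):x\ge i,\ y\ge j\}$. Let $(n_1,m_1),\dots,(n_s,m_s)$ be the vertices of $N(q)$ with $n_1<\cdots<n_s$, $m_1>\cdots>m_s$; for $1\le k\le s-1$ let $T_k$ be the $y$-intercept of the line through $(n_k,m_k)$ and $(n_{k+1},m_{k+1})$. Case 3 means: $s>1$ and $T_1\le\delta$; set $(\gamma,d)=(n_1,m_1)$ and $l_2=\frac{n_2-n_1}{m_1-m_2}$. Define $\gamma_n=\gamma(\delta^{n-1}+\delta^{n-2}d+\cdots+d^{n-1})$. *)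

theory Defs
  imports "HOL-Analysis.Analysis"
begin

definition has_expansion2 :: "(complex \<Rightarrow> complex \<Rightarrow> complex) \<Rightarrow> (nat \<Rightarrow> nat \<Rightarrow> complex) \<Rightarrow> bool" where
  "has_expansion2 g c \<longleftrightarrow> (\<exists>r>0. \<forall>z w. norm z < r \<and> norm w < r \<longrightarrow>
      ((\<lambda>(i,j). c i j * z ^ i * w ^ j) has_sum g z w) UNIV)"

definition has_expansion1 :: "(complex \<Rightarrow> complex) \<Rightarrow> (nat \<Rightarrow> complex) \<Rightarrow> bool" where
  "has_expansion1 g a \<longleftrightarrow> (\<exists>r>0. \<forall>z. norm z < r \<longrightarrow> (\<lambda>i. a i * z ^ i) sums g z)"

definition coeffs2 :: "(complex \<Rightarrow> complex \<Rightarrow> complex) \<Rightarrow> nat \<Rightarrow> nat \<Rightarrow> complex" where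
  "coeffs2 g = (THE c. has_expansion2 g c)"

text \<open>Second component of the iterate f^n = (p^n, Q^n) of the skew product f = (p,q).\<close>
fun Qit :: "(complex \<Rightarrow> complex) \<Rightarrow> (complex \<Rightarrow> complex \<Rightarrow> complex) \<Rightarrow> nat \<Rightarrow> complex \<Rightarrow> complex \<Rightarrow> complex" where
  "Qit p q 0 = (\<lambda>z w. w)"
| "Qit p q (Suc n) = (\<lambda>z w. q ((p ^^ n) z) (Qit p q n z w))"

definition newton_polygon :: "(nat \<Rightarrow> nat \<Rightarrow> complex) \<Rightarrow> (real \<times> real) set" where
  "newton_polygon c = convex hull (\<Union>{ {(x,y). x \<ge> real i \<and> y \<ge> real j} | i j. c i j \<noteq> 0})"

definition is_vertex :: "(nat \<Rightarrow> nat \<Rightarrow> complex) \<Rightarrow> real \<times> real \<Rightarrow> bool" where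
  "is_vertex c P \<longleftrightarrow> P extreme_point_of newton_polygon c"

definition next_vertex :: "(nat \<Rightarrow> nat \<Rightarrow> complex) \<Rightarrow> real \<times> real \<Rightarrow> real \<times> real \<Rightarrow> bool" where
  "next_vertex c P Q \<longleftrightarrow> is_vertex c P \<and> is_vertex c Q \<and> fst P < fst Q \<and>
      (\<forall>R. is_vertex c R \<and> fst P < fst R \<longrightarrow> fst Q \<le> fst R)"

definition slope :: "real \<times> real \<Rightarrow> real \<times> real \<Rightarrow> real" where
  "slope P Q = (snd Q - snd P) / (fst Q - fst P)"

definition yint :: "real \<times> real \<Rightarrow> real \<times> real \<Rightarrow> real" where
  "yint P Q = snd P - fst P * slope P Q"

end

(*
  Instead of the whole Newton polygon of Q^n we follow only its face with inner normal
  (wa,wb) = (m1 - m2, n2 - n1), the normal of the first edge of N(q).  The first coordinate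
  p^n(z) has the single lowest term z^(delta^n), of weight wa delta^n, and
  Q^(n+1)(z,w) = q(p^n(z), Q^n(z,w)).  Substituting, the term b_ij z^i w^j of q contributes a
  series whose face has weight i wa delta^n + j L_n, where L_n is the weight of the face of
  N(Q^n).  If delta > T_1 then L_n < wb delta^n and only the first vertex (n1,m1) attains the
  minimal weight, so the face of N(Q^(n+1)) is the image of that of N(Q^n) under
  (x,y) -> (n1 delta^n + m1 x, m1 y); if delta = T_1 every term of q on its first edge attains it,
  and the new face runs from the image of (n1,m1) to that of (n2,m2).  Since wa, wb > 0, the
  endpoints of such a face are consecutive vertices of the Newton polygon, joined by a segment of
  slope -wa/wb = -1/l_2.  Coefficients of compositions are computed with absolutely convergent
  double series, and coeffs2 is determined by the uniqueness of expansions.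
*)
theory Submission
  imports Defs
begin

section \<open>Absolutely convergent double power series\<close>

definition series_term :: "(nat \<Rightarrow> nat \<Rightarrow> 'a::real_normed_field) \<Rightarrow> 'a \<Rightarrow> 'a \<Rightarrow> nat \<times> nat \<Rightarrow> 'a" where
  "series_term c z w = (\<lambda>(i,j). c i j * z ^ i * w ^ j)"

definition coeff_prod :: "(nat \<Rightarrow> nat \<Rightarrow> 'a::comm_semiring_1) \<Rightarrow> (nat \<Rightarrow> nat \<Rightarrow> 'a) \<Rightarrow> nat \<Rightarrow> nat \<Rightarrow> 'a" where
  "coeff_prod c e k l = (\<Sum>(i,j)\<in>{..k}\<times>{..l}. c i j * e (k-i) (l-j))"

definition coeff_norm :: "(nat \<Rightarrow> nat \<Rightarrow> complex) \<Rightarrow> nat \<Rightarrow> nat \<Rightarrow> real" where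
  "coeff_norm c = (\<lambda>i j. norm (c i j))"

definition abs_convergent2 :: "(nat \<Rightarrow> nat \<Rightarrow> complex) \<Rightarrow> real \<Rightarrow> bool" where
  "abs_convergent2 c \<rho> \<longleftrightarrow> series_term (coeff_norm c) \<rho> \<rho> summable_on UNIV"

definition norm_series :: "(nat \<Rightarrow> nat \<Rightarrow> complex) \<Rightarrow> real \<Rightarrow> real" where
  "norm_series c \<rho> = infsum (series_term (coeff_norm c) \<rho> \<rho>) UNIV"

definition eval_series :: "(nat \<Rightarrow> nat \<Rightarrow> complex) \<Rightarrow> complex \<Rightarrow> complex \<Rightarrow> complex" where
  "eval_series c z w = infsum (series_term c z w) UNIV"

lemma
  fixes x :: "'b \<Rightarrow> 'a::{real_normed_field,banach}" and y :: "'c \<Rightarrow> 'a"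
  assumes x: "x abs_summable_on A" and y: "y abs_summable_on B"
  shows abs_summable_on_product_mult: "(\<lambda>(a,b). x a * y b) abs_summable_on A \<times> B"
    and infsum_product_mult: "infsum (\<lambda>(a,b). x a * y b) (A \<times> B) = infsum x A * infsum y B"
proof -
  have "(\<lambda>(a,b). norm (x a * y b)) summable_on A \<times> B"
  proof (rule summable_on_SigmaI[where g="\<lambda>a. norm (x a) * infsum (\<lambda>b. norm (y b)) B"])
    fix a assume "a \<in> A"
    show "((\<lambda>b. case (a, b) of (a, b) \<Rightarrow> norm (x a * y b)) has_sum norm (x a) * infsum (\<lambda>b. norm (y b)) B) B"
      using has_sum_cmult_right[OF has_sum_infsum[OF y], of "norm (x a)"] by (simp add: norm_mult)
  next
    show "(\<lambda>a. norm (x a) * infsum (\<lambda>b. norm (y b)) B) summable_on A"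
      using summable_on_cmult_left[OF x] by blast
  qed auto
  then show abs: "(\<lambda>(a,b). x a * y b) abs_summable_on A \<times> B"
    by (simp add: case_prod_unfold)
  have "infsum (\<lambda>(a,b). x a * y b) (A \<times> B) = infsum (\<lambda>a. infsum (\<lambda>b. x a * y b) B) A"
    using infsum_Sigma_banach[OF abs_summable_summable[OF abs]] by simp
  also have "\<dots> = infsum x A * infsum y B"
    by (simp add: infsum_cmult_right' infsum_cmult_left')
  finally show "infsum (\<lambda>(a,b). x a * y b) (A \<times> B) = infsum x A * infsum y B" .
qed

lemma series_term_coeff_prod_eq_sum:
  "series_term (coeff_prod c e) z w (k,l)
    = (\<Sum>(i,j)\<in>{..k}\<times>{..l}. series_term c z w (i,j) * series_term e z w (k-i,l-j))"
proof -
  have "series_term c z w (i,j) * series_term e z w (k-i,l-j) = c i j * e (k-i) (l-j) * z^k * w^l"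
    if "(i,j) \<in> {..k}\<times>{..l}" for i j
  proof -
    have "z^k = z^i * z^(k-i)" "w^l = w^j * w^(l-j)"
      using that by (simp_all add: power_add[symmetric])
    then show ?thesis by (simp add: series_term_def algebra_simps)
  qed
  then have "(\<Sum>(i,j)\<in>{..k}\<times>{..l}. series_term c z w (i,j) * series_term e z w (k-i,l-j))
      = (\<Sum>(i,j)\<in>{..k}\<times>{..l}. c i j * e (k-i) (l-j) * z^k * w^l)"
    by (intro sum.cong) auto
  also have "\<dots> = series_term (coeff_prod c e) z w (k,l)"
    by (simp add: series_term_def coeff_prod_def sum_distrib_right case_prod_unfold)
  finally show ?thesis ..
qed

lemma
  fixes c e :: "nat \<Rightarrow> nat \<Rightarrow> 'a::{real_normed_field,banach}"
  assumes c: "(\<lambda>p. norm (series_term c z w p)) summable_on UNIV"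
    and e: "(\<lambda>p. norm (series_term e z w p)) summable_on UNIV"
  shows summable_series_term_coeff_prod: "series_term (coeff_prod c e) z w summable_on UNIV"
    and infsum_series_term_coeff_prod:
      "infsum (series_term (coeff_prod c e) z w) UNIV
         = infsum (series_term c z w) UNIV * infsum (series_term e z w) UNIV"
proof -
  define F where "F = (\<lambda>(a,b). series_term c z w a * series_term e z w b)"
  define box where "box = (\<lambda>(k::nat,l::nat). {..k}\<times>{..l})"
  define split where "split = (\<lambda>((k::nat,l::nat),(i::nat,j::nat)). ((i,j),(k-i,l-j)))"
  have split_bij: "bij_betw split (Sigma UNIV box) UNIV"
    by (rule bij_betwI[where g="\<lambda>((i,j),(a,b)). ((i+a,j+b),(i,j))"])
       (auto simp: box_def split_def)
  have F_sum: "F summable_on UNIV"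
    using abs_summable_summable[OF abs_summable_on_product_mult[OF c e]] by (simp add: F_def)
  have G: "(\<lambda>x. F (split x)) summable_on Sigma UNIV box"
    using summable_on_reindex_bij_betw[OF split_bij] F_sum by blast
  have fiber: "infsum (\<lambda>y. F (split (x,y))) (box x) = series_term (coeff_prod c e) z w x" for x
    by (cases x) (auto simp: box_def F_def split_def series_term_coeff_prod_eq_sum intro!: sum.cong)
  have "(\<lambda>x. infsum (\<lambda>y. F (split (x,y))) (box x)) summable_on UNIV"
    by (rule summable_on_SigmaD[OF G]) (auto intro: summable_on_finite simp: box_def split: prod.splits)
  then show "series_term (coeff_prod c e) z w summable_on UNIV"
    by (simp add: fiber)
  have "infsum (series_term (coeff_prod c e) z w) UNIV = infsum (\<lambda>x. F (split x)) (Sigma UNIV box)"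
    using infsum_Sigma_banach[OF G] by (simp add: fiber)
  also have "\<dots> = infsum F UNIV"
    using infsum_reindex_bij_betw[OF split_bij] by blast
  also have "\<dots> = infsum (series_term c z w) UNIV * infsum (series_term e z w) UNIV"
    using infsum_product_mult[OF c e] by (simp add: F_def)
  finally show "infsum (series_term (coeff_prod c e) z w) UNIV
      = infsum (series_term c z w) UNIV * infsum (series_term e z w) UNIV" .
qed

lemma series_term_coeff_norm: "series_term (coeff_norm c) \<rho> \<rho> (i,j) = norm (c i j) * \<rho> ^ (i + j)"
  by (simp add: series_term_def coeff_norm_def power_add)

lemma series_term_coeff_norm_nonneg: "\<rho> \<ge> 0 \<Longrightarrow> series_term (coeff_norm c) \<rho> \<rho> p \<ge> 0"
  by (auto simp: series_term_def coeff_norm_def case_prod_unfold)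

lemma norm_series_nonneg: "\<rho> \<ge> 0 \<Longrightarrow> norm_series c \<rho> \<ge> 0"
  unfolding norm_series_def by (rule infsum_nonneg) (rule series_term_coeff_norm_nonneg)

lemma norm_series_term_le:
  "\<rho> \<ge> 0 \<Longrightarrow> norm z \<le> \<rho> \<Longrightarrow> norm w \<le> \<rho> \<Longrightarrow> norm (series_term c z w p) \<le> series_term (coeff_norm c) \<rho> \<rho> p"
  unfolding series_term_def coeff_norm_def case_prod_unfold
  by (auto simp: norm_mult norm_power intro!: mult_mono power_mono mult_nonneg_nonneg)

lemma
  assumes "\<rho> \<ge> 0" "abs_convergent2 c \<rho>" "norm z \<le> \<rho>" "norm w \<le> \<rho>"
  shows abs_convergent2_abs_summable: "(\<lambda>p. norm (series_term c z w p)) summable_on UNIV"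
    and abs_convergent2_summable: "series_term c z w summable_on UNIV"
    and norm_eval_series_le: "norm (eval_series c z w) \<le> norm_series c \<rho>"
proof -
  have maj: "series_term (coeff_norm c) \<rho> \<rho> summable_on UNIV"
    using assms(2) unfolding abs_convergent2_def .
  have le: "norm (series_term c z w p) \<le> series_term (coeff_norm c) \<rho> \<rho> p" for p
    using norm_series_term_le assms by blast
  show abs: "(\<lambda>p. norm (series_term c z w p)) summable_on UNIV"
    by (rule summable_on_comparison_test[OF maj]) (auto simp: le)
  show sum: "series_term c z w summable_on UNIV"
    by (rule abs_summable_summable[OF abs])
  show "norm (eval_series c z w) \<le> norm_series c \<rho>"
    unfolding eval_series_def norm_series_def
    by (rule norm_infsum_le[OF has_sum_infsum[OF sum] has_sum_infsum[OF maj]]) (simp add: le)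
qed

lemma abs_convergent2_mono:
  assumes "abs_convergent2 c \<rho>0" "0 \<le> \<rho>" "\<rho> \<le> \<rho>0"
  shows "abs_convergent2 c \<rho>" "norm_series c \<rho> \<le> norm_series c \<rho>0"
proof -
  have le: "series_term (coeff_norm c) \<rho> \<rho> p \<le> series_term (coeff_norm c) \<rho>0 \<rho>0 p" for p
    using assms(2,3) by (cases p) (auto simp: series_term_coeff_norm intro!: mult_left_mono power_mono)
  show sum: "abs_convergent2 c \<rho>" unfolding abs_convergent2_def
    by (rule summable_on_comparison_test[of "series_term (coeff_norm c) \<rho>0 \<rho>0"])
       (use assms le series_term_coeff_norm_nonneg in \<open>auto simp: abs_convergent2_def\<close>)
  show "norm_series c \<rho> \<le> norm_series c \<rho>0" unfolding norm_series_def
    by (rule infsum_mono) (use sum assms(1) le in \<open>auto simp: abs_convergent2_def\<close>)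
qed

lemma coeff_norm_coeff_prod_le: "coeff_norm (coeff_prod c e) k l \<le> coeff_prod (coeff_norm c) (coeff_norm e) k l"
  unfolding coeff_norm_def coeff_prod_def
  by (rule order_trans[OF norm_sum], rule sum_mono) (simp add: norm_mult case_prod_unfold)

lemma
  assumes r: "\<rho> \<ge> 0" and c: "abs_convergent2 c \<rho>" and e: "abs_convergent2 e \<rho>"
  shows abs_convergent2_coeff_prod: "abs_convergent2 (coeff_prod c e) \<rho>"
    and norm_series_coeff_prod_le: "norm_series (coeff_prod c e) \<rho> \<le> norm_series c \<rho> * norm_series e \<rho>"
proof -
  have nonneg: "(\<lambda>p. norm (series_term (coeff_norm c) \<rho> \<rho> p)) = series_term (coeff_norm c) \<rho> \<rho>" for c
    by (rule ext) (simp add: series_term_coeff_norm_nonneg[OF r])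
  note prod = summable_series_term_coeff_prod[of "coeff_norm c" \<rho> \<rho> "coeff_norm e"]
    infsum_series_term_coeff_prod[of "coeff_norm c" \<rho> \<rho> "coeff_norm e"]
  note prod = prod[unfolded nonneg, OF c[unfolded abs_convergent2_def] e[unfolded abs_convergent2_def]]
  have le: "series_term (coeff_norm (coeff_prod c e)) \<rho> \<rho> p
      \<le> series_term (coeff_prod (coeff_norm c) (coeff_norm e)) \<rho> \<rho> p" for p
    unfolding series_term_def case_prod_unfold using r
    by (auto intro!: mult_right_mono coeff_norm_coeff_prod_le)
  show sum: "abs_convergent2 (coeff_prod c e) \<rho>" unfolding abs_convergent2_def
    by (rule summable_on_comparison_test[OF prod(1)]) (auto simp: le series_term_coeff_norm_nonneg r)
  have "norm_series (coeff_prod c e) \<rho> \<le> infsum (series_term (coeff_prod (coeff_norm c) (coeff_norm e)) \<rho> \<rho>) UNIV"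
    unfolding norm_series_def using sum prod(1) le by (intro infsum_mono) (auto simp: abs_convergent2_def)
  also have "\<dots> = norm_series c \<rho> * norm_series e \<rho>"
    using prod(2) by (simp add: norm_series_def)
  finally show "norm_series (coeff_prod c e) \<rho> \<le> norm_series c \<rho> * norm_series e \<rho>" .
qed

lemma eval_series_coeff_prod:
  assumes "\<rho> \<ge> 0" "abs_convergent2 c \<rho>" "abs_convergent2 e \<rho>" "norm z \<le> \<rho>" "norm w \<le> \<rho>"
  shows "eval_series (coeff_prod c e) z w = eval_series c z w * eval_series e z w"
  unfolding eval_series_def
  using infsum_series_term_coeff_prod[OF abs_convergent2_abs_summable[OF assms(1,2,4,5)]
      abs_convergent2_abs_summable[OF assms(1,3,4,5)]] .

lemma
  assumes "finite A" "\<And>p. p \<notin> A \<Longrightarrow> f p = (0::'a::{comm_monoid_add,t2_space})"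
  shows summable_on_finite_support: "f summable_on UNIV"
    and infsum_finite_support: "infsum f UNIV = sum f A"
proof -
  have "f summable_on UNIV \<longleftrightarrow> f summable_on A"
    by (rule summable_on_cong_neutral) (use assms in auto)
  then show "f summable_on UNIV" using assms(1) by simp
  have "infsum f UNIV = infsum f A"
    by (rule infsum_cong_neutral) (use assms in auto)
  then show "infsum f UNIV = sum f A" using assms(1) by simp
qed

definition coeff_single :: "nat \<Rightarrow> nat \<Rightarrow> nat \<Rightarrow> nat \<Rightarrow> complex" where
  "coeff_single i0 j0 i j = (if i = i0 \<and> j = j0 then 1 else 0)"

lemma eval_series_coeff_single: "eval_series (coeff_single i0 j0) z w = z ^ i0 * w ^ j0"
proof -
  have supp: "series_term (coeff_single i0 j0) z w p = 0" if "p \<notin> {(i0,j0)}" for p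
    using that by (cases p) (auto simp: series_term_def coeff_single_def)
  have "eval_series (coeff_single i0 j0) z w = sum (series_term (coeff_single i0 j0) z w) {(i0,j0)}"
    unfolding eval_series_def by (rule infsum_finite_support[OF _ supp]) auto
  then show ?thesis by (simp add: series_term_def coeff_single_def)
qed

lemma
  shows abs_convergent2_coeff_single: "abs_convergent2 (coeff_single i0 j0) \<rho>"
    and norm_series_coeff_single: "norm_series (coeff_single i0 j0) \<rho> = \<rho> ^ i0 * \<rho> ^ j0"
proof -
  have supp: "series_term (coeff_norm (coeff_single i0 j0)) \<rho> \<rho> p = 0" if "p \<notin> {(i0,j0)}" for p
    using that by (cases p) (auto simp: series_term_def coeff_norm_def coeff_single_def)
  show "abs_convergent2 (coeff_single i0 j0) \<rho>"
    unfolding abs_convergent2_def by (rule summable_on_finite_support[of "{(i0,j0)}", OF _ supp]) auto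
  have "norm_series (coeff_single i0 j0) \<rho> = sum (series_term (coeff_norm (coeff_single i0 j0)) \<rho> \<rho>) {(i0,j0)}"
    unfolding norm_series_def by (rule infsum_finite_support[OF _ supp]) auto
  then show "norm_series (coeff_single i0 j0) \<rho> = \<rho> ^ i0 * \<rho> ^ j0"
    by (simp add: series_term_def coeff_norm_def coeff_single_def)
qed

primrec coeff_power :: "(nat \<Rightarrow> nat \<Rightarrow> complex) \<Rightarrow> nat \<Rightarrow> nat \<Rightarrow> nat \<Rightarrow> complex" where
  "coeff_power c 0 = coeff_single 0 0"
| "coeff_power c (Suc n) = coeff_prod c (coeff_power c n)"

lemma
  assumes r: "\<rho> \<ge> 0" and c: "abs_convergent2 c \<rho>"
  shows abs_convergent2_coeff_power: "abs_convergent2 (coeff_power c n) \<rho>"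
    and norm_series_coeff_power_le: "norm_series (coeff_power c n) \<rho> \<le> norm_series c \<rho> ^ n"
    and eval_series_coeff_power:
      "norm z \<le> \<rho> \<Longrightarrow> norm w \<le> \<rho> \<Longrightarrow> eval_series (coeff_power c n) z w = eval_series c z w ^ n"
proof -
  have conv_le: "abs_convergent2 (coeff_power c n) \<rho> \<and> norm_series (coeff_power c n) \<rho> \<le> norm_series c \<rho> ^ n"
    for n
  proof (induction n)
    case 0 then show ?case by (simp add: abs_convergent2_coeff_single norm_series_coeff_single)
  next
    case (Suc n)
    then have conv: "abs_convergent2 (coeff_power c n) \<rho>" by simp
    have "norm_series (coeff_power c (Suc n)) \<rho> \<le> norm_series c \<rho> * norm_series (coeff_power c n) \<rho>"
      using norm_series_coeff_prod_le[OF r c conv] by simp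
    also have "\<dots> \<le> norm_series c \<rho> * norm_series c \<rho> ^ n"
      using Suc by (intro mult_left_mono norm_series_nonneg r) auto
    finally show ?case using abs_convergent2_coeff_prod[OF r c conv] by simp
  qed
  then show "abs_convergent2 (coeff_power c n) \<rho>"
    and "norm_series (coeff_power c n) \<rho> \<le> norm_series c \<rho> ^ n" by auto
  show "norm z \<le> \<rho> \<Longrightarrow> norm w \<le> \<rho> \<Longrightarrow> eval_series (coeff_power c n) z w = eval_series c z w ^ n"
  proof (induction n)
    case 0 then show ?case by (simp add: eval_series_coeff_single)
  next
    case (Suc n)
    then show ?case
      using eval_series_coeff_prod[OF r c _ Suc.prems] conv_le by simp
  qed
qed

definition coeff_monomial :: "(nat \<Rightarrow> nat \<Rightarrow> complex) \<Rightarrow> (nat \<Rightarrow> nat \<Rightarrow> complex) \<Rightarrow> nat \<Rightarrow> nat \<Rightarrow> nat \<Rightarrow> nat \<Rightarrow> complex" where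
  "coeff_monomial U V i j = coeff_prod (coeff_power U i) (coeff_power V j)"

definition coeff_subst :: "(nat \<Rightarrow> nat \<Rightarrow> complex) \<Rightarrow> (nat \<Rightarrow> nat \<Rightarrow> complex) \<Rightarrow> (nat \<Rightarrow> nat \<Rightarrow> complex) \<Rightarrow> nat \<Rightarrow> nat \<Rightarrow> complex" where
  "coeff_subst b U V k l = infsum (\<lambda>(i,j). b i j * coeff_monomial U V i j k l) UNIV"

lemma
  assumes r: "\<rho> \<ge> 0" and U: "abs_convergent2 U \<rho>" and V: "abs_convergent2 V \<rho>"
  shows abs_convergent2_coeff_monomial: "abs_convergent2 (coeff_monomial U V i j) \<rho>"
    and norm_series_coeff_monomial_le:
      "norm_series (coeff_monomial U V i j) \<rho> \<le> norm_series U \<rho> ^ i * norm_series V \<rho> ^ j"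
    and eval_series_coeff_monomial: "norm z \<le> \<rho> \<Longrightarrow> norm w \<le> \<rho> \<Longrightarrow>
      eval_series (coeff_monomial U V i j) z w = eval_series U z w ^ i * eval_series V z w ^ j"
proof -
  note Ui = abs_convergent2_coeff_power[OF r U, of i] and Vj = abs_convergent2_coeff_power[OF r V, of j]
  show "abs_convergent2 (coeff_monomial U V i j) \<rho>"
    unfolding coeff_monomial_def using abs_convergent2_coeff_prod[OF r Ui Vj] .
  have "norm_series (coeff_monomial U V i j) \<rho> \<le> norm_series (coeff_power U i) \<rho> * norm_series (coeff_power V j) \<rho>"
    unfolding coeff_monomial_def using norm_series_coeff_prod_le[OF r Ui Vj] .
  also have "\<dots> \<le> norm_series U \<rho> ^ i * norm_series V \<rho> ^ j"
    using norm_series_coeff_power_le[OF r U] norm_series_coeff_power_le[OF r V]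
    by (intro mult_mono) (auto simp: norm_series_nonneg r)
  finally show "norm_series (coeff_monomial U V i j) \<rho> \<le> norm_series U \<rho> ^ i * norm_series V \<rho> ^ j" .
  show "norm z \<le> \<rho> \<Longrightarrow> norm w \<le> \<rho> \<Longrightarrow>
      eval_series (coeff_monomial U V i j) z w = eval_series U z w ^ i * eval_series V z w ^ j"
    unfolding coeff_monomial_def
    by (simp add: eval_series_coeff_prod[OF r Ui Vj] eval_series_coeff_power[OF r U] eval_series_coeff_power[OF r V])
qed

text \<open>The majorant of the double series of all terms of b_ij U^i V^j; its summability justifies
  the rearrangements in the two substitution lemmas below.\<close>

lemma summable_subst_majorant:
  assumes r: "\<rho> \<ge> 0" and U: "abs_convergent2 U \<rho>" and V: "abs_convergent2 V \<rho>" and b: "abs_convergent2 b R"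
    and UR: "norm_series U \<rho> \<le> R" and VR: "norm_series V \<rho> \<le> R"
  shows "(\<lambda>((i,j),k). norm (b i j) * series_term (coeff_norm (coeff_monomial U V i j)) \<rho> \<rho> k)
           summable_on UNIV \<times> UNIV"
proof (rule summable_on_SigmaI[where g="\<lambda>(i,j). norm (b i j) * norm_series (coeff_monomial U V i j) \<rho>"])
  fix x :: "nat \<times> nat"
  obtain i j where x: "x = (i,j)" by fastforce
  have "(series_term (coeff_norm (coeff_monomial U V i j)) \<rho> \<rho> has_sum norm_series (coeff_monomial U V i j) \<rho>) UNIV"
    using abs_convergent2_coeff_monomial[OF r U V]
    unfolding abs_convergent2_def norm_series_def by auto
  from has_sum_cmult_right[OF this, of "norm (b i j)"]
  show "((\<lambda>y. (\<lambda>((i,j),k). norm (b i j) * series_term (coeff_norm (coeff_monomial U V i j)) \<rho> \<rho> k) (x, y))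
      has_sum (case x of (i, j) \<Rightarrow> norm (b i j) * norm_series (coeff_monomial U V i j) \<rho>)) UNIV"
    by (simp add: x)
next
  show "(\<lambda>(i,j). norm (b i j) * norm_series (coeff_monomial U V i j) \<rho>) summable_on UNIV"
  proof (rule summable_on_comparison_test[where f="series_term (coeff_norm b) R R"])
    show "series_term (coeff_norm b) R R summable_on UNIV" using b unfolding abs_convergent2_def .
    fix x :: "nat \<times> nat"
    obtain i j where x: "x = (i,j)" by fastforce
    have "norm_series (coeff_monomial U V i j) \<rho> \<le> R^i * R^j"
      using norm_series_coeff_monomial_le[OF r U V, of i j] UR VR norm_series_nonneg[OF r, of U]
        norm_series_nonneg[OF r, of V]
      by (meson order_trans mult_mono power_mono zero_le_power)
    then show "(case x of (i, j) \<Rightarrow> norm (b i j) * norm_series (coeff_monomial U V i j) \<rho>)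
        \<le> series_term (coeff_norm b) R R x"
      by (simp add: x series_term_def coeff_norm_def mult.assoc mult_left_mono)
    show "0 \<le> (case x of (i, j) \<Rightarrow> norm (b i j) * norm_series (coeff_monomial U V i j) \<rho>)"
      by (simp add: x norm_series_nonneg r)
  qed
qed (auto simp: series_term_coeff_norm_nonneg r)

lemma abs_convergent2_coeff_subst:
  assumes r: "\<rho> > 0" and U: "abs_convergent2 U \<rho>" and V: "abs_convergent2 V \<rho>" and b: "abs_convergent2 b R"
    and UR: "norm_series U \<rho> \<le> R" and VR: "norm_series V \<rho> \<le> R"
  shows "abs_convergent2 (coeff_subst b U V) \<rho>"
proof -
  define T where "T = (\<lambda>(k,l) (i,j). b i j * coeff_monomial U V i j k l)"
  define Psi where "Psi = (\<lambda>k ij. norm (T k ij) * series_term (\<lambda>_ _. 1) \<rho> \<rho> k)"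
  have Psi_swap: "(\<lambda>(k,ij). Psi k ij) summable_on UNIV \<times> UNIV"
    using summable_subst_majorant[OF less_imp_le[OF r] U V b UR VR]
    by (subst summable_on_swap)
       (simp add: Psi_def T_def series_term_def coeff_norm_def norm_mult case_prod_unfold mult_ac)
  have fiber: "Psi k summable_on UNIV" for k
    using summable_on_SigmaD1[OF Psi_swap[unfolded Sigma_def[symmetric]]] by simp
  have scale: "Psi k = (\<lambda>ij. norm (T k ij) * series_term (\<lambda>_ _. 1) \<rho> \<rho> k)" for k
    by (simp add: Psi_def)
  have pos: "series_term (\<lambda>_ _. 1) \<rho> \<rho> k \<noteq> 0" for k
    using r by (cases k) (simp add: series_term_def)
  have T_abs: "(\<lambda>ij. norm (T k ij)) summable_on UNIV" for k
    using fiber[of k] summable_on_cmult_left'[OF pos[of k], of "\<lambda>ij. norm (T k ij)" UNIV]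
    by (simp add: scale)
  have T_sum: "T k summable_on UNIV" for k
    using abs_summable_summable[OF T_abs] .
  have bound: "series_term (coeff_norm (coeff_subst b U V)) \<rho> \<rho> k \<le> infsum (Psi k) UNIV" for k
  proof -
    have "norm (coeff_subst b U V (fst k) (snd k)) \<le> infsum (\<lambda>ij. norm (T k ij)) UNIV"
      unfolding coeff_subst_def using T_sum T_abs
      by (intro norm_infsum_le[OF has_sum_infsum has_sum_infsum]) (auto simp: T_def case_prod_unfold)
    then have "norm (coeff_subst b U V (fst k) (snd k)) * series_term (\<lambda>_ _. 1) \<rho> \<rho> k
        \<le> infsum (\<lambda>ij. norm (T k ij)) UNIV * series_term (\<lambda>_ _. 1) \<rho> \<rho> k"
      using r by (intro mult_right_mono) (auto simp: series_term_def case_prod_unfold)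
    then show ?thesis
      by (simp add: scale infsum_cmult_left' series_term_def coeff_norm_def case_prod_unfold mult.assoc)
  qed
  have outer: "(\<lambda>k. infsum (Psi k) UNIV) summable_on UNIV"
    using summable_on_SigmaD[OF Psi_swap[unfolded Sigma_def[symmetric]]] fiber by simp
  show ?thesis unfolding abs_convergent2_def
    by (rule summable_on_comparison_test[OF outer])
       (auto simp: bound series_term_coeff_norm_nonneg less_imp_le[OF r])
qed

lemma eval_series_coeff_subst:
  assumes r: "\<rho> > 0" and U: "abs_convergent2 U \<rho>" and V: "abs_convergent2 V \<rho>" and b: "abs_convergent2 b R"
    and UR: "norm_series U \<rho> \<le> R" and VR: "norm_series V \<rho> \<le> R"
    and z: "norm z \<le> \<rho>" and w: "norm w \<le> \<rho>"
  shows "eval_series (coeff_subst b U V) z w = eval_series b (eval_series U z w) (eval_series V z w)"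
proof -
  define Phi where "Phi = (\<lambda>(i,j) k. b i j * series_term (coeff_monomial U V i j) z w k)"
  have "(\<lambda>(ij,k). norm (Phi ij k)) summable_on UNIV \<times> UNIV"
    using summable_subst_majorant[OF less_imp_le[OF r] U V b UR VR]
  proof (rule summable_on_comparison_test)
    fix x :: "(nat \<times> nat) \<times> nat \<times> nat"
    obtain i j k where x: "x = ((i,j),k)" by (metis prod.collapse)
    have "norm (Phi (i,j) k) \<le> norm (b i j) * series_term (coeff_norm (coeff_monomial U V i j)) \<rho> \<rho> k"
      unfolding Phi_def using norm_series_term_le[OF less_imp_le[OF r] z w]
      by (simp add: norm_mult mult_left_mono)
    then show "(\<lambda>(ij,k). norm (Phi ij k)) x
        \<le> (\<lambda>((i,j),k). norm (b i j) * series_term (coeff_norm (coeff_monomial U V i j)) \<rho> \<rho> k) x"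
      by (simp add: x)
  qed (auto simp: case_prod_unfold)
  then have Phi_sum: "(\<lambda>(ij,k). Phi ij k) summable_on UNIV \<times> UNIV"
    using abs_summable_summable[of "\<lambda>(ij,k). Phi ij k"] by (simp add: case_prod_unfold)
  have by_monomial: "infsum (Phi ij) UNIV = series_term b (eval_series U z w) (eval_series V z w) ij" for ij
  proof (cases ij)
    case (Pair i j)
    have "infsum (Phi ij) UNIV = b i j * eval_series (coeff_monomial U V i j) z w"
      by (simp add: Pair Phi_def eval_series_def infsum_cmult_right')
    then show ?thesis
      using eval_series_coeff_monomial[OF less_imp_le[OF r] U V z w] by (simp add: Pair series_term_def mult.assoc)
  qed
  have by_degree: "infsum (\<lambda>ij. Phi ij k) UNIV = series_term (coeff_subst b U V) z w k" for k
    by (cases k) (simp add: Phi_def series_term_def coeff_subst_def case_prod_unfold infsum_cmult_left'[symmetric]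
        mult.assoc)
  show ?thesis
    using infsum_swap_banach[OF Phi_sum]
    by (simp add: by_monomial by_degree eval_series_def)
qed

section \<open>Uniqueness of expansions and composition of germs\<close>

lemma power_series_zero_coeffs:
  fixes a :: "nat \<Rightarrow> complex"
  assumes s: "s > 0" and zero: "\<And>x. norm x < s \<Longrightarrow> (\<lambda>n. a n * x ^ n) sums 0"
  shows "a n = 0"
proof (induction n rule: less_induct)
  case (less n)
  have "(\<lambda>k. a (k + n) * x ^ k) sums 0" if x: "x \<noteq> 0" "norm x < s" for x
  proof -
    have "(\<lambda>k. a (k + n) * x ^ (k + n)) sums (0 - (\<Sum>i<n. a i * x ^ i))"
      using sums_split_initial_segment[OF zero[OF x(2)]] .
    also have "(\<Sum>i<n. a i * x ^ i) = 0" using less by simp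
    finally have "(\<lambda>k. a (k + n) * x ^ (k + n) / x ^ n) sums (0 / x ^ n)"
      using sums_divide by fastforce
    then show ?thesis using x(1) by (simp add: power_add)
  qed
  then have "((\<lambda>_::complex. 0::complex) \<longlongrightarrow> a n) (at 0)"
    using powser_limit_0_strong[OF s, where a="\<lambda>k. a (k + n)" and f="\<lambda>_. 0"] by simp
  then show "a n = 0" using LIM_unique[OF _ tendsto_const] by force
qed

lemma has_expansion2_imp_abs_convergent2:
  assumes "has_expansion2 g c"
  obtains R where "R > 0" "abs_convergent2 c R"
    "\<And>z w. norm z \<le> R \<Longrightarrow> norm w \<le> R \<Longrightarrow> g z w = eval_series c z w"
proof -
  obtain r where r: "r > 0" and h: "\<And>z w. norm z < r \<Longrightarrow> norm w < r \<Longrightarrow>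
      (series_term c z w has_sum g z w) UNIV"
    using assms unfolding has_expansion2_def series_term_def by blast
  define R where "R = r / 2"
  have R: "R > 0" "R < r" using r by (auto simp: R_def)
  have "series_term c (of_real R) (of_real R) summable_on UNIV"
    using h[of "of_real R" "of_real R"] R unfolding summable_on_def by auto
  then have "(\<lambda>p. norm (series_term c (of_real R) (of_real R) p)) summable_on UNIV"
    using summable_on_iff_abs_summable_on_complex by blast
  moreover have "(\<lambda>p. norm (series_term c (of_real R) (of_real R) p)) = series_term (coeff_norm c) R R"
    using R by (auto simp: series_term_def coeff_norm_def norm_mult norm_power fun_eq_iff)
  ultimately have "abs_convergent2 c R" unfolding abs_convergent2_def by simp
  moreover have "g z w = eval_series c z w" if "norm z \<le> R" "norm w \<le> R" for z w
    using h[of z w] that R unfolding eval_series_def by (simp add: infsumI)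
  ultimately show ?thesis using R that by blast
qed

lemma abs_convergent2_imp_has_expansion2:
  assumes "R > 0" "abs_convergent2 c R" "\<And>z w. norm z \<le> R \<Longrightarrow> norm w \<le> R \<Longrightarrow> g z w = eval_series c z w"
  shows "has_expansion2 g c"
  unfolding has_expansion2_def
proof (intro exI conjI allI impI)
  fix z w :: complex assume zw: "norm z < R \<and> norm w < R"
  then have "series_term c z w summable_on UNIV"
    using abs_convergent2_summable[OF _ assms(2)] assms(1) by auto
  moreover have "g z w = eval_series c z w" using assms(3) zw by auto
  ultimately show "((\<lambda>(i,j). c i j * z ^ i * w ^ j) has_sum g z w) UNIV"
    unfolding eval_series_def series_term_def by simp
qed (rule assms(1))

lemma double_power_series_eq_0:
  fixes e :: "nat \<Rightarrow> nat \<Rightarrow> complex"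
  assumes R: "R > 0" and zero: "\<And>z w. norm z \<le> R \<Longrightarrow> norm w \<le> R \<Longrightarrow> (series_term e z w has_sum 0) UNIV"
  shows "e i j = 0"
proof -
  define F where "F = (\<lambda>i w. infsum (\<lambda>j. e i j * w ^ j) UNIV)"
  have row: "((\<lambda>j. e i j * w ^ j) has_sum F i w) UNIV" if w: "norm w \<le> R" for i w
  proof -
    have "(\<lambda>(x,y). series_term e (of_real R) w (x,y)) summable_on Sigma UNIV (\<lambda>_. UNIV)"
      using zero[of "of_real R" w] w R by (auto simp: summable_on_def)
    from summable_on_SigmaD1[OF this, of i]
    have "(\<lambda>j. (of_real R) ^ i * (e i j * w ^ j)) summable_on UNIV"
      by (simp add: series_term_def algebra_simps)
    then have "(\<lambda>j. e i j * w ^ j) summable_on UNIV"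
      using summable_on_cmult_right'[of "(of_real R::complex) ^ i"] R by auto
    then show ?thesis unfolding F_def by simp
  qed
  have F_zero: "F i w = 0" if w: "norm w < R" for i w
  proof -
    have "(\<lambda>i. F i w * z ^ i) sums 0" if z: "norm z < R" for z
    proof -
      have "((\<lambda>i. F i w * z ^ i) has_sum 0) UNIV"
      proof (rule has_sum_Sigma'[where f="series_term e z w" and B="\<lambda>_. UNIV"])
        show "(series_term e z w has_sum 0) (UNIV \<times> UNIV)" using zero z w by simp
        show "((\<lambda>j. series_term e z w (i, j)) has_sum F i w * z ^ i) UNIV" for i
          using has_sum_cmult_right[OF row[of w i], of "z^i"] w by (simp add: series_term_def algebra_simps)
      qed
      then show ?thesis by (rule has_sum_imp_sums)
    qed
    then show ?thesis using power_series_zero_coeffs[OF R, of "\<lambda>i. F i w"] by blast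
  qed
  have "(\<lambda>j. e i j * w ^ j) sums 0" if "norm w < R" for w
    using row F_zero that by (metis has_sum_imp_sums less_imp_le)
  then show ?thesis using power_series_zero_coeffs[OF R, of "\<lambda>j. e i j"] by blast
qed

lemma has_expansion2_unique:
  assumes "has_expansion2 g c" "has_expansion2 g c'"
  shows "c = c'"
proof -
  obtain R1 where R1: "R1 > 0" "abs_convergent2 c R1"
    "\<And>z w. norm z \<le> R1 \<Longrightarrow> norm w \<le> R1 \<Longrightarrow> g z w = eval_series c z w"
    using has_expansion2_imp_abs_convergent2[OF assms(1)] by blast
  obtain R2 where R2: "R2 > 0" "abs_convergent2 c' R2"
    "\<And>z w. norm z \<le> R2 \<Longrightarrow> norm w \<le> R2 \<Longrightarrow> g z w = eval_series c' z w"
    using has_expansion2_imp_abs_convergent2[OF assms(2)] by blast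
  define R where "R = min R1 R2"
  have R: "R > 0" "R \<le> R1" "R \<le> R2" using R1 R2 by (auto simp: R_def)
  have "(series_term (\<lambda>i j. c i j - c' i j) z w has_sum 0) UNIV" if zw: "norm z \<le> R" "norm w \<le> R" for z w
  proof -
    have "((\<lambda>p. series_term c z w p + - series_term c' z w p) has_sum (eval_series c z w + - eval_series c' z w)) UNIV"
      unfolding eval_series_def using R zw
      by (intro has_sum_add has_sum_uminusI has_sum_infsum abs_convergent2_summable[OF _ R1(2)]
          abs_convergent2_summable[OF _ R2(2)]) auto
    moreover have "eval_series c z w = eval_series c' z w"
      using R1(3)[of z w] R2(3)[of z w] R zw by simp
    moreover have "(\<lambda>p. series_term c z w p + - series_term c' z w p) = series_term (\<lambda>i j. c i j - c' i j) z w"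
      by (auto simp: series_term_def fun_eq_iff algebra_simps)
    ultimately show ?thesis by simp
  qed
  then show "c = c'" using double_power_series_eq_0[OF R(1), of "\<lambda>i j. c i j - c' i j"] by (auto simp: fun_eq_iff)
qed

lemma coeffs2_eqI: "has_expansion2 g c \<Longrightarrow> coeffs2 g = c"
  unfolding coeffs2_def using has_expansion2_unique by blast

definition coeff_lift :: "(nat \<Rightarrow> complex) \<Rightarrow> nat \<Rightarrow> nat \<Rightarrow> complex" where
  "coeff_lift a i j = (if j = 0 then a i else 0)"

lemma has_sum_first_column:
  fixes f :: "nat \<times> nat \<Rightarrow> 'b::{comm_monoid_add,t2_space}"
  assumes "\<And>i j. j \<noteq> 0 \<Longrightarrow> f (i,j) = 0"
  shows "(f has_sum s) UNIV \<longleftrightarrow> ((\<lambda>i. f (i,0)) has_sum s) UNIV"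
proof -
  have "(f has_sum s) UNIV \<longleftrightarrow> (f has_sum s) (range (\<lambda>i. (i,0)))"
    by (rule has_sum_cong_neutral) (use assms in \<open>auto simp: image_iff\<close>)
  also have "\<dots> \<longleftrightarrow> ((f \<circ> (\<lambda>i. (i,0))) has_sum s) UNIV"
    by (rule has_sum_reindex) (auto simp: inj_on_def)
  finally show ?thesis by (simp add: o_def)
qed

lemma has_expansion2_coeff_lift:
  assumes "has_expansion1 p a"
  shows "has_expansion2 (\<lambda>z w. p z) (coeff_lift a)"
proof -
  obtain r where r: "r > 0" and h: "\<And>z. norm z < r \<Longrightarrow> (\<lambda>i. a i * z ^ i) sums p z"
    using assms unfolding has_expansion1_def by blast
  define R where "R = r / 4"
  have R: "R > 0" "2 * R < r" using r by (auto simp: R_def)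
  have sum2R: "summable (\<lambda>n. a n * (of_real (2 * R)) ^ n)"
    using h[of "of_real (2 * R)"] R by (auto simp: sums_iff)
  have abs: "summable (\<lambda>n. norm (a n * z ^ n))" if "norm z \<le> R" for z
    using powser_insidea[OF sum2R, of z] that R by (simp add: abs_of_pos)
  have "(\<lambda>i. series_term (coeff_norm (coeff_lift a)) R R (i,0)) summable_on UNIV"
    using norm_summable_imp_summable_on[of "\<lambda>n. norm (a n * of_real R ^ n)"] abs[of "of_real R"] R
    by (simp add: series_term_def coeff_norm_def coeff_lift_def norm_mult norm_power)
  then have "abs_convergent2 (coeff_lift a) R" unfolding abs_convergent2_def summable_on_def
    using has_sum_first_column[of "series_term (coeff_norm (coeff_lift a)) R R"]
    by (auto simp: series_term_def coeff_norm_def coeff_lift_def)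
  moreover have "p z = eval_series (coeff_lift a) z w" if z: "norm z \<le> R" for z w
  proof -
    have "((\<lambda>i. a i * z ^ i) has_sum p z) UNIV"
      using norm_summable_imp_has_sum[OF abs[OF z] h] z R by simp
    then have "(series_term (coeff_lift a) z w has_sum p z) UNIV"
      using has_sum_first_column[of "series_term (coeff_lift a) z w"]
      by (auto simp: series_term_def coeff_lift_def)
    then show ?thesis unfolding eval_series_def by (simp add: infsumI)
  qed
  ultimately show ?thesis using R by (intro abs_convergent2_imp_has_expansion2) auto
qed

lemma has_expansion2_fst: "has_expansion2 (\<lambda>z w. z) (coeff_single 1 0)"
  by (rule abs_convergent2_imp_has_expansion2[of 1])
     (auto simp: abs_convergent2_coeff_single eval_series_coeff_single)

lemma norm_series_shrink:
  assumes r0: "\<rho>0 > 0" and conv: "abs_convergent2 c \<rho>0" and c00: "c 0 0 = 0" and r: "0 < \<rho>" "\<rho> \<le> \<rho>0"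
  shows "norm_series c \<rho> \<le> \<rho> / \<rho>0 * norm_series c \<rho>0"
proof -
  define s where "s = \<rho> / \<rho>0"
  have s: "0 \<le> s" "s \<le> 1" "\<rho> = s * \<rho>0" using r r0 by (auto simp: s_def)
  have le: "series_term (coeff_norm c) \<rho> \<rho> p \<le> s * series_term (coeff_norm c) \<rho>0 \<rho>0 p" for p
  proof (cases p)
    case (Pair i j)
    show ?thesis
    proof (cases "i + j = 0")
      case True then show ?thesis using c00 by (simp add: Pair series_term_coeff_norm)
    next
      case False
      have "\<rho> ^ (i+j) = s ^ (i+j) * \<rho>0 ^ (i+j)" by (simp add: s(3) power_mult_distrib)
      also have "\<dots> \<le> s * \<rho>0 ^ (i+j)"
        using power_decreasing[of 1 "i+j" s] False s r0 by (intro mult_right_mono) auto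
      finally have "norm (c i j) * \<rho> ^ (i+j) \<le> norm (c i j) * (s * \<rho>0 ^ (i+j))"
        by (rule mult_left_mono) simp
      then show ?thesis by (simp add: Pair series_term_coeff_norm algebra_simps)
    qed
  qed
  have "norm_series c \<rho> \<le> infsum (\<lambda>p. s * series_term (coeff_norm c) \<rho>0 \<rho>0 p) UNIV"
    unfolding norm_series_def
    using abs_convergent2_mono(1)[OF conv] r conv
    by (intro infsum_mono le summable_on_cmult_right) (auto simp: abs_convergent2_def)
  also have "\<dots> = s * norm_series c \<rho>0" unfolding norm_series_def by (rule infsum_cmult_right')
  finally show ?thesis by (simp add: s_def)
qed

lemma abs_convergent2_small_norm:
  assumes r0: "\<rho>0 > 0" and conv: "abs_convergent2 c \<rho>0" and c00: "c 0 0 = 0" and R: "R > 0"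
  obtains \<rho> where "0 < \<rho>" "\<rho> \<le> \<rho>0" "norm_series c \<rho> \<le> R"
proof -
  define M where "M = norm_series c \<rho>0"
  have M: "M \<ge> 0" using norm_series_nonneg r0 by (simp add: M_def)
  define \<rho> where "\<rho> = \<rho>0 * R / (M + R)"
  have r: "0 < \<rho>" "\<rho> \<le> \<rho>0" using r0 R M by (auto simp: \<rho>_def field_simps)
  have "norm_series c \<rho> \<le> \<rho> / \<rho>0 * M" using norm_series_shrink[OF r0 conv c00 r] by (simp add: M_def)
  also have "\<rho> / \<rho>0 * M = R * M / (M + R)" using r0 by (simp add: \<rho>_def)
  also have "\<dots> \<le> R" using M R by (simp add: field_simps)
  finally show ?thesis using r that by blast
qed

text \<open>The germs P and Q vanish at the origin, so on a small enough polydisc their values stay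
  inside the polydisc of convergence of q.\<close>

lemma has_expansion2_comp:
  assumes q: "has_expansion2 q b" and P: "has_expansion2 P U" and Q: "has_expansion2 Q V"
    and U00: "U 0 0 = 0" and V00: "V 0 0 = 0"
  shows "has_expansion2 (\<lambda>z w. q (P z w) (Q z w)) (coeff_subst b U V)"
proof -
  obtain R where R: "R > 0" "abs_convergent2 b R"
    "\<And>u v. norm u \<le> R \<Longrightarrow> norm v \<le> R \<Longrightarrow> q u v = eval_series b u v"
    using has_expansion2_imp_abs_convergent2[OF q] by blast
  obtain \<rho>1 where \<rho>1: "\<rho>1 > 0" "abs_convergent2 U \<rho>1"
    "\<And>z w. norm z \<le> \<rho>1 \<Longrightarrow> norm w \<le> \<rho>1 \<Longrightarrow> P z w = eval_series U z w"
    using has_expansion2_imp_abs_convergent2[OF P] by blast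
  obtain \<rho>2 where \<rho>2: "\<rho>2 > 0" "abs_convergent2 V \<rho>2"
    "\<And>z w. norm z \<le> \<rho>2 \<Longrightarrow> norm w \<le> \<rho>2 \<Longrightarrow> Q z w = eval_series V z w"
    using has_expansion2_imp_abs_convergent2[OF Q] by blast
  define \<rho>3 where "\<rho>3 = min \<rho>1 \<rho>2"
  have \<rho>3: "\<rho>3 > 0" "\<rho>3 \<le> \<rho>1" "\<rho>3 \<le> \<rho>2" using \<rho>1 \<rho>2 by (auto simp: \<rho>3_def)
  have U3: "abs_convergent2 U \<rho>3" and V3: "abs_convergent2 V \<rho>3"
    using abs_convergent2_mono(1) \<rho>1 \<rho>2 \<rho>3 by auto
  obtain \<rho>4 where \<rho>4: "0 < \<rho>4" "\<rho>4 \<le> \<rho>3" "norm_series U \<rho>4 \<le> R"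
    using abs_convergent2_small_norm[OF \<rho>3(1) U3 U00 R(1)] by blast
  obtain \<rho> where \<rho>: "0 < \<rho>" "\<rho> \<le> \<rho>4" "norm_series V \<rho> \<le> R"
    using abs_convergent2_small_norm[OF \<rho>4(1) abs_convergent2_mono(1)[OF V3] V00 R(1)] \<rho>4 by auto
  have U: "abs_convergent2 U \<rho>" "norm_series U \<rho> \<le> R"
    using abs_convergent2_mono[OF abs_convergent2_mono(1)[OF U3], of \<rho>4 \<rho>] \<rho>4 \<rho> by auto
  have V: "abs_convergent2 V \<rho>" using abs_convergent2_mono(1)[OF V3] \<rho> \<rho>4 by auto
  show ?thesis
  proof (rule abs_convergent2_imp_has_expansion2[OF \<rho>(1) abs_convergent2_coeff_subst[OF \<rho>(1) U(1) V R(2) U(2) \<rho>(3)]])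
    fix z w :: complex assume z: "norm z \<le> \<rho>" and w: "norm w \<le> \<rho>"
    have "P z w = eval_series U z w" "Q z w = eval_series V z w"
      using \<rho>1(3) \<rho>2(3) z w \<rho> \<rho>3 \<rho>4 by auto
    moreover have "norm (eval_series U z w) \<le> R" "norm (eval_series V z w) \<le> R"
      using norm_eval_series_le[OF _ U(1) z w] norm_eval_series_le[OF _ V z w] \<rho> U(2) by auto
    ultimately show "q (P z w) (Q z w) = eval_series (coeff_subst b U V) z w"
      using R(3) eval_series_coeff_subst[OF \<rho>(1) U(1) V R(2) U(2) \<rho>(3) z w] by simp
  qed
qed

section \<open>Faces of coefficient arrays with a positive inner normal\<close>

text \<open>Geometrically, [(x1,y1),(x2,y2)] is the (possibly degenerate)
  face of the Newton polygon of c with inner normal (wa,wb).\<close>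

definition lower_edge :: "nat \<Rightarrow> nat \<Rightarrow> (nat \<Rightarrow> nat \<Rightarrow> complex) \<Rightarrow> nat \<Rightarrow> nat \<Rightarrow> nat \<Rightarrow> nat \<Rightarrow> nat \<Rightarrow> bool" where
  "lower_edge wa wb c L x1 y1 x2 y2 \<longleftrightarrow>
    (\<forall>k l. c k l \<noteq> 0 \<longrightarrow> L \<le> wa*k + wb*l) \<and>
    (\<forall>k l. c k l \<noteq> 0 \<and> wa*k + wb*l = L \<longrightarrow> x1 \<le> k \<and> k \<le> x2) \<and>
    wa*x1 + wb*y1 = L \<and> wa*x2 + wb*y2 = L \<and> c x1 y1 \<noteq> 0 \<and> c x2 y2 \<noteq> 0"

lemma
  assumes "lower_edge wa wb c L x1 y1 x2 y2"
  shows lower_edge_weight_ge: "c k l \<noteq> 0 \<Longrightarrow> L \<le> wa*k + wb*l"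
    and lower_edge_between: "c k l \<noteq> 0 \<Longrightarrow> wa*k + wb*l = L \<Longrightarrow> x1 \<le> k \<and> k \<le> x2"
    and lower_edge_ends: "wa*x1 + wb*y1 = L" "wa*x2 + wb*y2 = L" "c x1 y1 \<noteq> 0" "c x2 y2 \<noteq> 0"
  using assms unfolding lower_edge_def by blast+

lemma coeff_prod_single_term:
  assumes "i0 \<le> k" "j0 \<le> l"
    and "\<And>i j. i \<le> k \<Longrightarrow> j \<le> l \<Longrightarrow> (i,j) \<noteq> (i0,j0) \<Longrightarrow> c i j * e (k-i) (l-j) = 0"
  shows "coeff_prod c e k l = c i0 j0 * e (k-i0) (l-j0)"
proof -
  have "coeff_prod c e k l = (\<lambda>(i,j). c i j * e (k-i) (l-j)) (i0,j0)
      + (\<Sum>(i,j)\<in>{..k}\<times>{..l} - {(i0,j0)}. c i j * e (k-i) (l-j))"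
    unfolding coeff_prod_def by (rule sum.remove) (use assms in auto)
  also have "(\<Sum>(i,j)\<in>{..k}\<times>{..l} - {(i0,j0)}. c i j * e (k-i) (l-j)) = 0"
    by (rule sum.neutral) (use assms(3) in auto)
  finally show ?thesis by simp
qed

lemma coeff_prod_nonzeroE:
  assumes "coeff_prod c e k l \<noteq> 0"
  obtains i j where "i \<le> k" "j \<le> l" "c i j \<noteq> 0" "e (k-i) (l-j) \<noteq> 0"
proof -
  obtain p where "p \<in> {..k}\<times>{..l}" "(\<lambda>(i,j). c i j * e (k-i) (l-j)) p \<noteq> 0"
    using assms unfolding coeff_prod_def by (meson sum.not_neutral_contains_not_neutral)
  moreover obtain i j where "p = (i,j)" by fastforce
  ultimately have "i \<le> k" "j \<le> l" "c i j \<noteq> 0" "e (k-i) (l-j) \<noteq> 0" by auto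
  then show ?thesis by (rule that)
qed

lemma coeff_prod_weight:
  assumes c: "lower_edge wa wb c L1 x1 y1 x2 y2" and e: "lower_edge wa wb e L2 u1 v1 u2 v2"
    and ij: "i \<le> k" "j \<le> l" "c i j \<noteq> 0" "e (k-i) (l-j) \<noteq> 0"
  shows "L1 + L2 \<le> wa*k + wb*l"
    and "wa*k + wb*l = L1 + L2 \<Longrightarrow>
      wa*i + wb*j = L1 \<and> x1 \<le> i \<and> i \<le> x2 \<and> u1 \<le> k-i \<and> k-i \<le> u2"
proof -
  obtain a a' where "k = i + a" "l = j + a'" using ij(1,2) le_iff_add by metis
  then have split: "wa*k + wb*l = (wa*i + wb*j) + (wa*(k-i) + wb*(l-j))"
    by (simp add: distrib_left)
  have le: "L1 \<le> wa*i + wb*j" "L2 \<le> wa*(k-i) + wb*(l-j)"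
    using lower_edge_weight_ge[OF c ij(3)] lower_edge_weight_ge[OF e ij(4)] .
  show "L1 + L2 \<le> wa*k + wb*l" using split le by linarith
  assume "wa*k + wb*l = L1 + L2"
  then have on_lines: "wa*i + wb*j = L1" "wa*(k-i) + wb*(l-j) = L2" using split le by linarith+
  then show "wa*i + wb*j = L1 \<and> x1 \<le> i \<and> i \<le> x2 \<and> u1 \<le> k-i \<and> k-i \<le> u2"
    using lower_edge_between[OF c ij(3) on_lines(1)] lower_edge_between[OF e ij(4) on_lines(2)] by blast
qed

lemma coeff_prod_edge_term:
  assumes wb: "wb > 0"
    and c: "lower_edge wa wb c L1 x1 y1 x2 y2" and e: "lower_edge wa wb e L2 u1 v1 u2 v2"
    and xy: "wa*x + wb*y = L1" and uv: "wa*u + wb * v = L2"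
    and pinned: "\<And>i k. x1 \<le> i \<Longrightarrow> i \<le> x2 \<Longrightarrow> u1 \<le> k \<Longrightarrow> k \<le> u2 \<Longrightarrow> i + k = x + u \<Longrightarrow> i = x"
  shows "coeff_prod c e (x+u) (y+v) = c x y * e u v"
proof -
  have line: "wa*(x+u) + wb*(y+v) = L1 + L2" using xy uv by (simp add: algebra_simps)
  have "c i j * e (x+u-i) (y+v-j) = 0" if ij: "i \<le> x+u" "j \<le> y+v" "(i,j) \<noteq> (x,y)" for i j
  proof (rule ccontr)
    assume "c i j * e (x+u-i) (y+v-j) \<noteq> 0"
    then have nz: "c i j \<noteq> 0" "e (x+u-i) (y+v-j) \<noteq> 0" by auto
    have on_line: "wa*i + wb*j = L1" and "x1 \<le> i" "i \<le> x2" "u1 \<le> x+u-i" "x+u-i \<le> u2"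
      using coeff_prod_weight(2)[OF c e ij(1,2) nz line] by auto
    then have "i = x" using pinned ij(1) by simp
    then have "wb*j = wb*y" using on_line xy by (simp only:)
    then show False using \<open>i = x\<close> wb ij(3) by simp
  qed
  then have "coeff_prod c e (x+u) (y+v) = c x y * e (x+u-x) (y+v-y)"
    by (intro coeff_prod_single_term) auto
  then show ?thesis by simp
qed

lemma lower_edge_coeff_prod:
  assumes wb: "wb > 0"
    and c: "lower_edge wa wb c L1 x1 y1 x2 y2" and e: "lower_edge wa wb e L2 u1 v1 u2 v2"
  shows "lower_edge wa wb (coeff_prod c e) (L1+L2) (x1+u1) (y1+v1) (x2+u2) (y2+v2)"
    and "coeff_prod c e (x1+u1) (y1+v1) = c x1 y1 * e u1 v1"
    and "coeff_prod c e (x2+u2) (y2+v2) = c x2 y2 * e u2 v2"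
proof -
  note W = coeff_prod_weight[OF c e]
  note line = lower_edge_ends(1,2)[OF c] lower_edge_ends(1,2)[OF e]
  have line1: "wa*(x1+u1) + wb*(y1+v1) = L1 + L2" and line2: "wa*(x2+u2) + wb*(y2+v2) = L1 + L2"
    using line by (simp_all add: algebra_simps)
  show lo: "coeff_prod c e (x1+u1) (y1+v1) = c x1 y1 * e u1 v1"
    by (rule coeff_prod_edge_term[OF wb c e line(1,3)]) linarith
  show hi: "coeff_prod c e (x2+u2) (y2+v2) = c x2 y2 * e u2 v2"
    by (rule coeff_prod_edge_term[OF wb c e line(2,4)]) linarith
  have "L1 + L2 \<le> wa*k + wb*l" if "coeff_prod c e k l \<noteq> 0" for k l
    using that by (rule coeff_prod_nonzeroE) (use W(1) in blast)
  moreover have "x1 + u1 \<le> k \<and> k \<le> x2 + u2" if "coeff_prod c e k l \<noteq> 0" "wa*k + wb*l = L1 + L2" for k l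
    using that(1)
  proof (rule coeff_prod_nonzeroE)
    fix i j assume ij: "i \<le> k" "j \<le> l" "c i j \<noteq> 0" "e (k-i) (l-j) \<noteq> 0"
    then have "x1 \<le> i" "i \<le> x2" "u1 \<le> k-i" "k-i \<le> u2" using W(2)[OF ij that(2)] by auto
    then show ?thesis using ij(1) by linarith
  qed
  moreover have "coeff_prod c e (x1+u1) (y1+v1) \<noteq> 0" "coeff_prod c e (x2+u2) (y2+v2) \<noteq> 0"
    using lo hi lower_edge_ends(3,4)[OF c] lower_edge_ends(3,4)[OF e] by simp_all
  ultimately show "lower_edge wa wb (coeff_prod c e) (L1+L2) (x1+u1) (y1+v1) (x2+u2) (y2+v2)"
    unfolding lower_edge_def using line1 line2 by blast
qed

lemma lower_edge_coeff_power:
  assumes wb: "wb > 0" and c: "lower_edge wa wb c L x1 y1 x2 y2"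
  shows "lower_edge wa wb (coeff_power c n) (n*L) (n*x1) (n*y1) (n*x2) (n*y2) \<and>
    coeff_power c n (n*x1) (n*y1) = c x1 y1 ^ n \<and> coeff_power c n (n*x2) (n*y2) = c x2 y2 ^ n"
proof (induction n)
  case 0 then show ?case by (simp add: lower_edge_def coeff_single_def)
next
  case (Suc n)
  then show ?case using lower_edge_coeff_prod[OF wb c conjunct1[OF Suc.IH]] by simp
qed

lemma lower_edge_coeff_monomial:
  assumes wb: "wb > 0"
    and U: "lower_edge wa wb U LU xu1 yu1 xu2 yu2" and V: "lower_edge wa wb V LV xv1 yv1 xv2 yv2"
  shows "lower_edge wa wb (coeff_monomial U V i j) (i*LU + j*LV)
      (i*xu1 + j*xv1) (i*yu1 + j*yv1) (i*xu2 + j*xv2) (i*yu2 + j*yv2)"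
    and "coeff_monomial U V i j (i*xu1 + j*xv1) (i*yu1 + j*yv1) = U xu1 yu1 ^ i * V xv1 yv1 ^ j"
    and "coeff_monomial U V i j (i*xu2 + j*xv2) (i*yu2 + j*yv2) = U xu2 yu2 ^ i * V xv2 yv2 ^ j"
proof -
  note Ui = lower_edge_coeff_power[OF wb U, of i] and Vj = lower_edge_coeff_power[OF wb V, of j]
  note P = lower_edge_coeff_prod[OF wb conjunct1[OF Ui] conjunct1[OF Vj]]
  show "lower_edge wa wb (coeff_monomial U V i j) (i*LU + j*LV)
      (i*xu1 + j*xv1) (i*yu1 + j*yv1) (i*xu2 + j*xv2) (i*yu2 + j*yv2)"
    using P(1) by (simp only: coeff_monomial_def)
  show "coeff_monomial U V i j (i*xu1 + j*xv1) (i*yu1 + j*yv1) = U xu1 yu1 ^ i * V xv1 yv1 ^ j"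
    using P(2) Ui Vj by (simp only: coeff_monomial_def)
  show "coeff_monomial U V i j (i*xu2 + j*xv2) (i*yu2 + j*yv2) = U xu2 yu2 ^ i * V xv2 yv2 ^ j"
    using P(3) Ui Vj by (simp only: coeff_monomial_def)
qed

lemma coeff_subst_nonzeroE:
  assumes "coeff_subst b U V k l \<noteq> 0"
  obtains i j where "b i j \<noteq> 0" "coeff_monomial U V i j k l \<noteq> 0"
proof -
  have "\<exists>i j. b i j * coeff_monomial U V i j k l \<noteq> 0"
  proof (rule ccontr)
    assume "\<not> ?thesis"
    then have "(\<lambda>(i,j). b i j * coeff_monomial U V i j k l) = (\<lambda>_. 0)" by auto
    then show False using assms by (simp add: coeff_subst_def)
  qed
  then show ?thesis using that by auto
qed

lemma coeff_subst_single_term: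
  assumes "\<And>i j. (i,j) \<noteq> (i0,j0) \<Longrightarrow> b i j * coeff_monomial U V i j k l = 0"
  shows "coeff_subst b U V k l = b i0 j0 * coeff_monomial U V i0 j0 k l"
proof -
  have "(\<lambda>(i,j). b i j * coeff_monomial U V i j k l) p = 0" if "p \<notin> {(i0,j0)}" for p
    using assms[of "fst p" "snd p"] that by (cases p) auto
  then have "coeff_subst b U V k l = (\<Sum>(i,j)\<in>{(i0,j0)}. b i j * coeff_monomial U V i j k l)"
    unfolding coeff_subst_def by (intro infsum_finite_support) auto
  then show ?thesis by simp
qed

lemma coeff_subst_weight:
  assumes wb: "wb > 0"
    and U: "lower_edge wa wb U LU xu1 yu1 xu2 yu2" and V: "lower_edge wa wb V LV xv1 yv1 xv2 yv2"
    and b_ge: "\<forall>i j. b i j \<noteq> 0 \<longrightarrow> L \<le> i*LU + j*LV"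
    and ij: "b i j \<noteq> 0" "coeff_monomial U V i j k l \<noteq> 0"
  shows "L \<le> wa*k + wb*l"
    and "wa*k + wb*l = L \<Longrightarrow> i*LU + j*LV = L \<and> i*xu1 + j*xv1 \<le> k \<and> k \<le> i*xu2 + j*xv2"
proof -
  note T = lower_edge_coeff_monomial(1)[OF wb U V, of i j]
  have le: "L \<le> i*LU + j*LV" "i*LU + j*LV \<le> wa*k + wb*l"
    using b_ge ij(1) lower_edge_weight_ge[OF T ij(2)] by auto
  then show "L \<le> wa*k + wb*l" by linarith
  assume "wa*k + wb*l = L"
  then have "i*LU + j*LV = L" using le by linarith
  then show "i*LU + j*LV = L \<and> i*xu1 + j*xv1 \<le> k \<and> k \<le> i*xu2 + j*xv2"
    using lower_edge_between[OF T ij(2)] \<open>wa*k + wb*l = L\<close> by simp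
qed

text \<open>The series b_ij U^i V^j has the edge with endpoints (i xu1 + j xv1, ...) and
  (i xu2 + j xv2, ...) of weight i LU + j LV; the edge of the sum comes from the terms of b of
  minimal such weight.\<close>

lemma lower_edge_coeff_subst:
  assumes wb: "wb > 0"
    and U: "lower_edge wa wb U LU xu1 yu1 xu2 yu2" and V: "lower_edge wa wb V LV xv1 yv1 xv2 yv2"
    and b_ge: "\<And>i j. b i j \<noteq> 0 \<Longrightarrow> L \<le> i*LU + j*LV"
    and b_between: "\<And>i j. b i j \<noteq> 0 \<Longrightarrow> i*LU + j*LV = L \<Longrightarrow> X1 \<le> i*xu1 + j*xv1 \<and> i*xu2 + j*xv2 \<le> X2"
    and left: "b il jl \<noteq> 0" "il*LU + jl*LV = L" "X1 = il*xu1 + jl*xv1" "Y1 = il*yu1 + jl*yv1"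
    and left_unique: "\<And>i j. b i j \<noteq> 0 \<Longrightarrow> i*LU + j*LV = L \<Longrightarrow> (i,j) \<noteq> (il,jl) \<Longrightarrow> X1 < i*xu1 + j*xv1"
    and right: "b ir jr \<noteq> 0" "ir*LU + jr*LV = L" "X2 = ir*xu2 + jr*xv2" "Y2 = ir*yu2 + jr*yv2"
    and right_unique: "\<And>i j. b i j \<noteq> 0 \<Longrightarrow> i*LU + j*LV = L \<Longrightarrow> (i,j) \<noteq> (ir,jr) \<Longrightarrow> i*xu2 + j*xv2 < X2"
  shows "lower_edge wa wb (coeff_subst b U V) L X1 Y1 X2 Y2"
proof -
  have "\<forall>i j. b i j \<noteq> 0 \<longrightarrow> L \<le> i*LU + j*LV" using b_ge by blast
  note W = coeff_subst_weight[OF wb U V this]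
  note T = lower_edge_coeff_monomial[OF wb U V]
  note ends = lower_edge_ends[OF U] lower_edge_ends[OF V]
  have "wa*X1 + wb*Y1 = il*(wa*xu1 + wb*yu1) + jl*(wa*xv1 + wb*yv1)"
    "wa*X2 + wb*Y2 = ir*(wa*xu2 + wb*yu2) + jr*(wa*xv2 + wb*yv2)"
    using left(3,4) right(3,4) by (simp_all add: algebra_simps)
  then have line1: "wa*X1 + wb*Y1 = L" and line2: "wa*X2 + wb*Y2 = L"
    using left(2) right(2) ends by simp_all
  have "coeff_subst b U V X1 Y1 = b il jl * coeff_monomial U V il jl X1 Y1"
  proof (rule coeff_subst_single_term, rule ccontr)
    fix i j assume ne: "(i,j) \<noteq> (il,jl)" and "b i j * coeff_monomial U V i j X1 Y1 \<noteq> 0"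
    then have nz: "b i j \<noteq> 0" "coeff_monomial U V i j X1 Y1 \<noteq> 0" by auto
    then show False using W(2)[OF nz line1] left_unique[OF nz(1) _ ne] by fastforce
  qed
  then have lo: "coeff_subst b U V X1 Y1 \<noteq> 0"
    using left T(2)[of il jl] ends by simp
  have "coeff_subst b U V X2 Y2 = b ir jr * coeff_monomial U V ir jr X2 Y2"
  proof (rule coeff_subst_single_term, rule ccontr)
    fix i j assume ne: "(i,j) \<noteq> (ir,jr)" and "b i j * coeff_monomial U V i j X2 Y2 \<noteq> 0"
    then have nz: "b i j \<noteq> 0" "coeff_monomial U V i j X2 Y2 \<noteq> 0" by auto
    then show False using W(2)[OF nz line2] right_unique[OF nz(1) _ ne] by fastforce
  qed
  then have hi: "coeff_subst b U V X2 Y2 \<noteq> 0"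
    using right T(3)[of ir jr] ends by simp
  have "L \<le> wa*k + wb*l" if "coeff_subst b U V k l \<noteq> 0" for k l
    using that by (rule coeff_subst_nonzeroE) (rule W(1))
  moreover have "X1 \<le> k \<and> k \<le> X2" if "coeff_subst b U V k l \<noteq> 0" "wa*k + wb*l = L" for k l
    using that(1)
  proof (rule coeff_subst_nonzeroE)
    fix i j assume nz: "b i j \<noteq> 0" "coeff_monomial U V i j k l \<noteq> 0"
    then show ?thesis using W(2)[OF nz that(2)] b_between[OF nz(1)] by fastforce
  qed
  ultimately show ?thesis unfolding lower_edge_def using line1 line2 lo hi by blast
qed

lemma lower_edge_coeff_subst_single:
  assumes wb: "wb > 0"
    and U: "lower_edge wa wb U LU xu1 yu1 xu2 yu2" and V: "lower_edge wa wb V LV xv1 yv1 xv2 yv2"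
    and b_ge: "\<And>i j. b i j \<noteq> 0 \<Longrightarrow> i*LU + j*LV \<ge> il*LU + jl*LV"
    and unique: "\<And>i j. b i j \<noteq> 0 \<Longrightarrow> i*LU + j*LV = il*LU + jl*LV \<Longrightarrow> (i,j) = (il,jl)"
    and nz: "b il jl \<noteq> 0"
  shows "lower_edge wa wb (coeff_subst b U V) (il*LU + jl*LV)
    (il*xu1 + jl*xv1) (il*yu1 + jl*yv1) (il*xu2 + jl*xv2) (il*yu2 + jl*yv2)"
proof (rule lower_edge_coeff_subst[OF wb U V, where il=il and jl=jl and ir=il and jr=jl])
  fix i j assume ij: "b i j \<noteq> 0"
  show "il*LU + jl*LV \<le> i*LU + j*LV" using b_ge[OF ij] .
  assume "i*LU + j*LV = il*LU + jl*LV"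
  then have "(i,j) = (il,jl)" by (rule unique[OF ij])
  then show "il*xu1 + jl*xv1 \<le> i*xu1 + j*xv1 \<and> i*xu2 + j*xv2 \<le> il*xu2 + jl*xv2"
    and "(i,j) \<noteq> (il,jl) \<Longrightarrow> il*xu1 + jl*xv1 < i*xu1 + j*xv1"
    and "(i,j) \<noteq> (il,jl) \<Longrightarrow> i*xu2 + j*xv2 < il*xu2 + jl*xv2" by auto
qed (use nz in simp_all)

section \<open>Newton polygons\<close>

definition lower_region :: "real \<Rightarrow> real \<Rightarrow> real \<Rightarrow> real \<Rightarrow> real \<Rightarrow> real set \<Rightarrow> (real \<times> real) set" where
  "lower_region \<alpha> \<beta> A \<gamma> \<delta> I = {p. A \<le> \<alpha> * fst p + \<beta> * snd p \<and>
     (\<alpha> * fst p + \<beta> * snd p = A \<longrightarrow> \<gamma> * fst p + \<delta> * snd p \<in> I)}"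

lemma convex_comb_nonneg_eq_0:
  fixes u a b :: real
  assumes "0 < u" "u < 1" "0 \<le> a" "0 \<le> b" "(1-u)*a + u*b = 0"
  shows "a = 0" "b = 0"
proof -
  have "(1-u)*a \<ge> 0" "u*b \<ge> 0" using assms by auto
  then have "(1-u)*a = 0" "u*b = 0" using assms(5) by linarith+
  then show "a = 0" "b = 0" using assms(1,2) by auto
qed

lemma convex_lower_region:
  assumes I: "convex I"
  shows "convex (lower_region \<alpha> \<beta> A \<gamma> \<delta> I)"
  unfolding convex_alt
proof (intro ballI allI impI)
  fix x y :: "real \<times> real" and u :: real
  assume x: "x \<in> lower_region \<alpha> \<beta> A \<gamma> \<delta> I" and y: "y \<in> lower_region \<alpha> \<beta> A \<gamma> \<delta> I"
    and u: "0 \<le> u \<and> u \<le> 1"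
  define fx fy gx gy where "fx = \<alpha> * fst x + \<beta> * snd x" and "fy = \<alpha> * fst y + \<beta> * snd y"
    and "gx = \<gamma> * fst x + \<delta> * snd x" and "gy = \<gamma> * fst y + \<delta> * snd y"
  have fx: "A \<le> fx" "fx = A \<Longrightarrow> gx \<in> I" and fy: "A \<le> fy" "fy = A \<Longrightarrow> gy \<in> I"
    using x y by (auto simp: lower_region_def fx_def gx_def fy_def gy_def)
  let ?z = "(1 - u) *\<^sub>R x + u *\<^sub>R y"
  have fz: "\<alpha> * fst ?z + \<beta> * snd ?z = (1-u)*fx + u*fy"
    and gz: "\<gamma> * fst ?z + \<delta> * snd ?z = (1-u)*gx + u*gy"
    by (simp_all add: fx_def fy_def gx_def gy_def algebra_simps)
  have "(1-u)*A \<le> (1-u)*fx" "u*A \<le> u*fy" using fx fy u by (auto intro: mult_left_mono)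
  then have "A \<le> (1-u)*fx + u*fy" by (simp add: algebra_simps)
  moreover have "(1-u)*gx + u*gy \<in> I" if on_line: "(1-u)*fx + u*fy = A"
  proof -
    consider "u = 0" | "u = 1" | "0 < u" "u < 1" using u by fastforce
    then show ?thesis
    proof cases
      case 3
      have "(1-u)*(fx - A) + u*(fy - A) = 0" using on_line by (simp add: algebra_simps)
      then have "fx = A" "fy = A" using convex_comb_nonneg_eq_0[OF 3, of "fx - A" "fy - A"] fx fy by auto
      then show ?thesis using I u fx fy unfolding convex_alt by auto
    qed (use on_line fx fy in auto)
  qed
  ultimately show "?z \<in> lower_region \<alpha> \<beta> A \<gamma> \<delta> I" unfolding lower_region_def using fz gz by simp
qed

lemma extreme_point_of_lower_region:
  assumes N: "N \<subseteq> lower_region \<alpha> \<beta> A \<gamma> \<delta> {\<gamma> * fst P + \<delta> * snd P..}"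
    and P: "P \<in> N" "\<alpha> * fst P + \<beta> * snd P = A" and indep: "\<alpha> * \<delta> \<noteq> \<beta> * \<gamma>"
  shows "P extreme_point_of N"
  unfolding extreme_point_of_def
proof (intro conjI ballI notI)
  show "P \<in> N" by fact
  fix a b assume a: "a \<in> N" and b: "b \<in> N" and s: "P \<in> open_segment a b"
  then obtain u where ab: "a \<noteq> b" and u: "0 < u" "u < 1" and Pu: "P = (1 - u) *\<^sub>R a + u *\<^sub>R b"
    by (auto simp: in_segment)
  define f g where "f = (\<lambda>p::real \<times> real. \<alpha> * fst p + \<beta> * snd p)" and "g = (\<lambda>p::real \<times> real. \<gamma> * fst p + \<delta> * snd p)"
  have fa: "A \<le> f a" "f a = A \<Longrightarrow> g P \<le> g a" and fb: "A \<le> f b" "f b = A \<Longrightarrow> g P \<le> g b"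
    using N a b by (auto simp: lower_region_def f_def g_def)
  have "(1-u)*(f a - A) + u*(f b - A) = 0" using P(2) by (simp add: Pu f_def algebra_simps)
  then have "f a = A" "f b = A" using convex_comb_nonneg_eq_0[OF u, of "f a - A" "f b - A"] fa fb by auto
  moreover have "(1-u)*(g a - g P) + u*(g b - g P) = 0" by (simp add: Pu g_def algebra_simps)
  ultimately have "g a = g P" "g b = g P"
    using convex_comb_nonneg_eq_0[OF u, of "g a - g P" "g b - g P"] fa fb by auto
  have "p = q" if "f p = f q" "g p = g q" for p q :: "real \<times> real"
  proof -
    define s t where "s = fst p - fst q" and "t = snd p - snd q"
    have eqs: "\<alpha> * s + \<beta> * t = 0" "\<gamma> * s + \<delta> * t = 0"
      using that by (auto simp: s_def t_def f_def g_def algebra_simps)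
    have "(\<alpha> * \<delta> - \<beta> * \<gamma>) * s = \<delta> * (\<alpha> * s + \<beta> * t) - \<beta> * (\<gamma> * s + \<delta> * t)"
      "(\<alpha> * \<delta> - \<beta> * \<gamma>) * t = \<alpha> * (\<gamma> * s + \<delta> * t) - \<gamma> * (\<alpha> * s + \<beta> * t)"
      by (simp_all add: algebra_simps)
    then have "(\<alpha> * \<delta> - \<beta> * \<gamma>) * s = 0" "(\<alpha> * \<delta> - \<beta> * \<gamma>) * t = 0"
      unfolding eqs by simp_all
    then have "s = 0" "t = 0" using indep by simp_all
    then show "p = q" by (simp add: s_def t_def prod_eq_iff)
  qed
  then have "a = b" using \<open>f a = A\<close> \<open>f b = A\<close> \<open>g a = g P\<close> \<open>g b = g P\<close> by simp
  then show False using ab by simp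
qed

definition support_region :: "(nat \<Rightarrow> nat \<Rightarrow> complex) \<Rightarrow> (real \<times> real) set" where
  "support_region c = \<Union>{ {(x,y). x \<ge> real i \<and> y \<ge> real j} | i j. c i j \<noteq> 0}"

lemma support_region_iff:
  "p \<in> support_region c \<longleftrightarrow> (\<exists>i j. c i j \<noteq> 0 \<and> real i \<le> fst p \<and> real j \<le> snd p)"
  unfolding support_region_def by (cases p) auto

lemma newton_polygon_eq: "newton_polygon c = convex hull (support_region c)"
  by (simp add: newton_polygon_def support_region_def)

lemma convex_newton_polygon: "convex (newton_polygon c)"
  unfolding newton_polygon_eq by simp

lemma newton_polygon_subset:
  assumes "convex F" "\<And>i j x y. c i j \<noteq> 0 \<Longrightarrow> real i \<le> x \<Longrightarrow> real j \<le> y \<Longrightarrow> (x,y) \<in> F"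
  shows "newton_polygon c \<subseteq> F"
  unfolding newton_polygon_eq
proof (rule hull_minimal)
  show "support_region c \<subseteq> F"
    using assms(2) by (auto simp: support_region_iff)
qed (use assms in simp)

lemma support_point_in_newton_polygon: "c i j \<noteq> 0 \<Longrightarrow> (real i, real j) \<in> newton_polygon c"
  unfolding newton_polygon_eq by (rule hull_inc) (auto simp: support_region_iff)

lemma newton_polygon_closed_segment:
  "A \<in> newton_polygon c \<Longrightarrow> B \<in> newton_polygon c \<Longrightarrow> 0 \<le> t \<Longrightarrow> t \<le> 1 \<Longrightarrow>
    (1 - t) *\<^sub>R A + t *\<^sub>R B \<in> newton_polygon c"
  using convex_newton_polygon[of c] unfolding convex_alt by blast

lemma newton_polygon_add_quadrant:
  assumes "p \<in> newton_polygon c" "h1 \<ge> 0" "h2 \<ge> 0"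
  shows "p + (h1,h2) \<in> newton_polygon c"
proof -
  have "(\<lambda>x. (h1,h2) + x) ` support_region c \<subseteq> support_region c"
    using assms(2,3) by (force simp: support_region_iff)
  then have "convex hull ((\<lambda>x. (h1,h2) + x) ` support_region c) \<subseteq> newton_polygon c"
    unfolding newton_polygon_eq by (rule hull_mono)
  moreover have "(h1,h2) + p \<in> (\<lambda>x. (h1,h2) + x) ` (convex hull support_region c)"
    using assms(1) unfolding newton_polygon_eq by (rule imageI)
  ultimately show ?thesis using convex_hull_translation[of "(h1,h2)" "support_region c"]
    by (auto simp: add.commute)
qed

lemma not_extreme_point_above:
  assumes "p \<in> newton_polygon c" "h1 \<ge> 0" "h2 \<ge> 0" "(h1,h2) \<noteq> (0,0)"
  shows "\<not> (p + (h1,h2)) extreme_point_of newton_polygon c"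
proof
  assume e: "(p + (h1,h2)) extreme_point_of newton_polygon c"
  have q: "p + (2*h1,2*h2) \<in> newton_polygon c" using newton_polygon_add_quadrant[OF assms(1)] assms(2,3) by simp
  have "p + (h1,h2) \<in> open_segment p (p + (2*h1,2*h2))"
    unfolding in_segment
  proof (intro conjI exI)
    show "p \<noteq> p + (2*h1, 2*h2)" using assms(4) by (auto simp: prod_eq_iff)
    show "p + (h1, h2) = (1 - 1/2) *\<^sub>R p + (1/2::real) *\<^sub>R (p + (2*h1, 2*h2))"
      by (simp add: prod_eq_iff algebra_simps)
  qed auto
  then show False using e assms(1) q unfolding extreme_point_of_def by blast
qed

lemma is_vertex_support_point:
  assumes "is_vertex c P"
  obtains i j where "c i j \<noteq> 0" "P = (real i, real j)"
proof -
  have e: "P extreme_point_of newton_polygon c" using assms by (simp add: is_vertex_def)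
  then have "P \<in> support_region c" unfolding newton_polygon_eq by (rule extreme_point_of_convex_hull)
  then obtain i j where ij: "c i j \<noteq> 0" "real i \<le> fst P" "real j \<le> snd P"
    unfolding support_region_iff by blast
  have "(fst P - real i, snd P - real j) = (0,0)"
  proof (rule ccontr)
    assume "(fst P - real i, snd P - real j) \<noteq> (0,0)"
    then have "\<not> (real i, real j) + (fst P - real i, snd P - real j) extreme_point_of newton_polygon c"
      using not_extreme_point_above[OF support_point_in_newton_polygon[of c i j, OF ij(1)],
          of "fst P - real i" "snd P - real j"] ij by simp
    then show False using e by simp
  qed
  then show ?thesis using that ij(1) by (auto simp: prod_eq_iff)
qed

lemma segment_point_with_fst:
  fixes A B :: "real \<times> real"
  assumes "fst A < X" "X \<le> fst B"
  obtains t where "0 < t" "t \<le> 1" "fst ((1 - t) *\<^sub>R A + t *\<^sub>R B) = X" "X < fst B \<Longrightarrow> t < 1"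
proof
  define t where "t = (X - fst A) / (fst B - fst A)"
  have d: "fst B - fst A > 0" using assms by simp
  have "fst ((1 - t) *\<^sub>R A + t *\<^sub>R B) = fst A + t * (fst B - fst A)" by (simp add: algebra_simps)
  then show "fst ((1 - t) *\<^sub>R A + t *\<^sub>R B) = X" using d by (simp add: t_def)
  show "0 < t" "t \<le> 1" "X < fst B \<Longrightarrow> t < 1" using assms d by (auto simp: t_def field_simps)
qed

lemma of_nat_weight: "real (wa*i + wb*j) = real wa * real i + real wb * real j"
  by simp

lemma lexmin_support_extreme_point:
  fixes wa wb ga gb :: nat
  assumes nz: "c i0 j0 \<noteq> 0"
    and min: "\<And>i j. c i j \<noteq> 0 \<Longrightarrow> wa*i0 + wb*j0 \<le> wa*i + wb*j"
    and tie: "\<And>i j. c i j \<noteq> 0 \<Longrightarrow> wa*i + wb*j = wa*i0 + wb*j0 \<Longrightarrow> ga*i0 + gb*j0 \<le> ga*i + gb*j"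
    and indep: "wa*gb \<noteq> wb*ga"
  shows "(real i0, real j0) extreme_point_of newton_polygon c"
proof (rule extreme_point_of_lower_region)
  let ?A = "real (wa*i0 + wb*j0)" and ?G = "real (ga*i0 + gb*j0)"
  show "newton_polygon c \<subseteq> lower_region (real wa) (real wb) ?A (real ga) (real gb)
      {real ga * fst (real i0, real j0) + real gb * snd (real i0, real j0)..}"
  proof (rule newton_polygon_subset[OF convex_lower_region])
    fix i j x y assume ij: "c i j \<noteq> 0" and xy: "real i \<le> x" "real j \<le> y"
    have "real wa * real i \<le> real wa * x" "real wb * real j \<le> real wb * y"
      "real ga * real i \<le> real ga * x" "real gb * real j \<le> real gb * y"
      using xy by (simp_all add: mult_left_mono)
    moreover have "?A \<le> real (wa*i + wb*j)" using min[OF ij] by linarith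
    moreover have "?G \<le> real (ga*i + gb*j)" if "wa*i + wb*j = wa*i0 + wb*j0"
      using tie[OF ij that] by linarith
    moreover have "wa*i + wb*j = wa*i0 + wb*j0" if "real wa * x + real wb * y = ?A"
    proof -
      have "real (wa*i + wb*j) \<le> ?A" using that xy \<open>real wa * real i \<le> real wa * x\<close>
        \<open>real wb * real j \<le> real wb * y\<close> by (simp only: of_nat_weight)
      then show ?thesis using min[OF ij] by linarith
    qed
    ultimately show "(x, y) \<in> lower_region (real wa) (real wb) ?A (real ga) (real gb)
        {real ga * fst (real i0, real j0) + real gb * snd (real i0, real j0)..}"
      unfolding lower_region_def of_nat_weight by auto
  qed simp
  show "(real i0, real j0) \<in> newton_polygon c" using support_point_in_newton_polygon[of c, OF nz] .
  show "real wa * fst (real i0, real j0) + real wb * snd (real i0, real j0) = ?A" by simp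
  show "real wa * real gb \<noteq> real wb * real ga" using indep by (metis of_nat_eq_iff of_nat_mult)
qed

lemma support_lexminE:
  fixes f g :: "nat \<Rightarrow> nat \<Rightarrow> nat"
  assumes "c i j \<noteq> 0"
  obtains i0 j0 where "c i0 j0 \<noteq> 0" "\<And>i j. c i j \<noteq> 0 \<Longrightarrow> f i0 j0 \<le> f i j"
    "\<And>i j. c i j \<noteq> 0 \<Longrightarrow> f i j = f i0 j0 \<Longrightarrow> g i0 j0 \<le> g i j"
proof -
  define m where "m = (LEAST m. \<exists>i j. c i j \<noteq> 0 \<and> f i j = m)"
  have "\<exists>m i j. c i j \<noteq> 0 \<and> f i j = m" using assms by blast
  then have m: "\<exists>i j. c i j \<noteq> 0 \<and> f i j = m" "\<And>i j. c i j \<noteq> 0 \<Longrightarrow> m \<le> f i j"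
    unfolding m_def by (rule LeastI_ex, auto intro: Least_le)
  define m' where "m' = (LEAST m'. \<exists>i j. c i j \<noteq> 0 \<and> f i j = m \<and> g i j = m')"
  have "\<exists>m' i j. c i j \<noteq> 0 \<and> f i j = m \<and> g i j = m'" using m(1) by blast
  then have "\<exists>i j. c i j \<noteq> 0 \<and> f i j = m \<and> g i j = m'"
    "\<And>i j. c i j \<noteq> 0 \<Longrightarrow> f i j = m \<Longrightarrow> m' \<le> g i j"
    unfolding m'_def by (rule LeastI_ex, auto intro: Least_le)
  then show ?thesis using that m(2) by metis
qed

lemma newton_polygon_subset_lower_region:
  assumes wa: "wa > 0" and c: "lower_edge wa wb c L x1 y1 x2 y2"
  shows "newton_polygon c \<subseteq> lower_region (real wa) (real wb) (real L) 1 0 {real x1..real x2}"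
proof (rule newton_polygon_subset[OF convex_lower_region])
  fix i j x y assume ij: "c i j \<noteq> 0" and xy: "real i \<le> x" "real j \<le> y"
  have wx: "real wa * real i \<le> real wa * x" "real wb * real j \<le> real wb * y"
    using xy by (simp_all add: mult_left_mono)
  have "real L \<le> real (wa*i + wb*j)" using lower_edge_weight_ge[OF c ij] by linarith
  moreover have "x \<in> {real x1..real x2}" if on_line: "real wa * x + real wb * y = real L"
  proof -
    have "real (wa*i + wb*j) \<le> real L" using on_line wx by simp
    then have "wa*i + wb*j = L" using lower_edge_weight_ge[OF c ij] by linarith
    moreover have "real wa * real i = real wa * x"
      using on_line wx \<open>real L \<le> real (wa*i + wb*j)\<close> by (simp only: of_nat_weight)
    then have "x = real i" using wa by simp
    ultimately show ?thesis using lower_edge_between[OF c ij] by simp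
  qed
  ultimately show "(x, y) \<in> lower_region (real wa) (real wb) (real L) 1 0 {real x1..real x2}"
    unfolding lower_region_def using wx by auto
qed simp

lemma lower_edge_ends_in_newton_polygon:
  assumes c: "lower_edge wa wb c L x1 y1 x2 y2"
  shows "(real x1, real y1) \<in> newton_polygon c" "(real x2, real y2) \<in> newton_polygon c"
    and "real wa * real x1 + real wb * real y1 = real L" "real wa * real x2 + real wb * real y2 = real L"
  using support_point_in_newton_polygon lower_edge_ends(3,4)[OF c]
    arg_cong[OF lower_edge_ends(1)[OF c], of real] arg_cong[OF lower_edge_ends(2)[OF c], of real]
  by simp_all

lemma not_vertex_inside_lower_edge:
  assumes wa: "wa > 0" and wb: "wb > 0" and c: "lower_edge wa wb c L x1 y1 x2 y2"
    and R: "real x1 < fst R" "fst R < real x2"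
  shows "\<not> is_vertex c R"
proof
  let ?N = "newton_polygon c" and ?P = "(real x1, real y1)" and ?Q = "(real x2, real y2)"
  note ends = lower_edge_ends_in_newton_polygon[OF c]
  assume "is_vertex c R"
  then have eR: "R extreme_point_of ?N" and RN: "R \<in> ?N" by (auto simp: is_vertex_def extreme_point_of_def)
  obtain t where t: "0 < t" "t < 1" "fst ((1 - t) *\<^sub>R ?P + t *\<^sub>R ?Q) = fst R"
    using segment_point_with_fst[of ?P "fst R" ?Q] R by auto
  define S where "S = (1 - t) *\<^sub>R ?P + t *\<^sub>R ?Q"
  have SN: "S \<in> ?N" unfolding S_def using newton_polygon_closed_segment[OF ends(1,2), of t] t by simp
  have "real wa * fst S + real wb * snd S
      = (1-t) * (real wa * real x1 + real wb * real y1) + t * (real wa * real x2 + real wb * real y2)"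
    by (simp add: S_def algebra_simps)
  then have "real wa * fst S + real wb * snd S = real L" unfolding ends(3,4) by (simp add: algebra_simps)
  moreover have "real L \<le> real wa * fst R + real wb * snd R"
    using newton_polygon_subset_lower_region[OF wa c] RN by (auto simp: lower_region_def)
  moreover have "real wa * fst S = real wa * fst R" using t(3) by (simp add: S_def)
  ultimately have "real wb * snd S \<le> real wb * snd R" by linarith
  then have le: "snd S \<le> snd R" using wb by simp
  show False
  proof (cases "snd S = snd R")
    case True
    then have "R = S" using t(3) by (simp add: S_def prod_eq_iff)
    moreover have "S \<in> open_segment ?P ?Q" unfolding in_segment S_def using t R by auto
    ultimately show False using eR ends(1,2) unfolding extreme_point_of_def by blast
  next
    case False
    then have "R = S + (0, snd R - snd S)" using t(3) by (simp add: S_def prod_eq_iff)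
    then show False using not_extreme_point_above[OF SN, of 0 "snd R - snd S"] le False eR by auto
  qed
qed

lemma lower_edge_next_vertex:
  assumes wa: "wa > 0" and wb: "wb > 0" and c: "lower_edge wa wb c L x1 y1 x2 y2" and x12: "x1 < x2"
  shows "next_vertex c (real x1, real y1) (real x2, real y2)"
proof -
  note N = newton_polygon_subset_lower_region[OF wa c] and ends = lower_edge_ends_in_newton_polygon[OF c]
  have "(real x1, real y1) extreme_point_of newton_polygon c"
    by (rule extreme_point_of_lower_region[where \<alpha>="real wa" and \<beta>="real wb" and A="real L"
          and \<gamma>=1 and \<delta>=0]) (use N wb ends in \<open>auto simp: lower_region_def\<close>)
  moreover have "(real x2, real y2) extreme_point_of newton_polygon c"
    by (rule extreme_point_of_lower_region[where \<alpha>="real wa" and \<beta>="real wb" and A="real L"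
          and \<gamma>="-1" and \<delta>=0]) (use N wb ends in \<open>auto simp: lower_region_def\<close>)
  moreover have "real x2 \<le> fst R" if "is_vertex c R" "real x1 < fst R" for R
    using not_vertex_inside_lower_edge[OF wa wb c, of R] that by fastforce
  ultimately show ?thesis using x12 by (auto simp: next_vertex_def is_vertex_def)
qed

lemma
  assumes wa: "wa > 0" and wb: "wb > 0" and c: "lower_edge wa wb c L x1 y1 x2 y2" and y12: "y2 < y1"
  shows lower_edge_fst_less: "x1 < x2"
    and slope_lower_edge: "slope (real x1, real y1) (real x2, real y2) = - (real wa / real wb)"
    and yint_lower_edge: "yint (real x1, real y1) (real x2, real y2) = real L / real wb"
proof -
  note line = lower_edge_ends_in_newton_polygon(3,4)[OF c]
  then have "real wa * (real x2 - real x1) = real wb * (real y1 - real y2)" by (simp add: algebra_simps)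
  moreover have "real wb * (real y1 - real y2) > 0" using wb y12 by simp
  ultimately have "real wa * (real x2 - real x1) > 0" by simp
  then show x12: "x1 < x2" using wa by (simp add: zero_less_mult_iff)
  have sl: "(real y2 - real y1) / (real x2 - real x1) = - (real wa / real wb)"
    using line x12 wb by (simp add: field_simps)
  then show "slope (real x1, real y1) (real x2, real y2) = - (real wa / real wb)" by (simp add: slope_def)
  have "yint (real x1, real y1) (real x2, real y2) = real y1 + real x1 * (real wa / real wb)"
    using sl by (simp add: yint_def slope_def)
  also have "\<dots> = real L / real wb" using line(1) wb by (simp add: field_simps)
  finally show "yint (real x1, real y1) (real x2, real y2) = real L / real wb" .
qed

context
  fixes b :: "nat \<Rightarrow> nat \<Rightarrow> complex" and n1 m1 n2 m2 :: nat
  assumes first_vertex: "is_vertex b (real n1, real m1)"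
    and first_leftmost: "\<forall>R. is_vertex b R \<longrightarrow> real n1 \<le> fst R"
    and second_vertex: "next_vertex b (real n1, real m1) (real n2, real m2)"
begin

lemma first_edge_support: "b n1 m1 \<noteq> 0" "b n2 m2 \<noteq> 0"
proof -
  obtain i j where "b i j \<noteq> 0" "(real n1, real m1) = (real i, real j)"
    using is_vertex_support_point[OF first_vertex] .
  then show "b n1 m1 \<noteq> 0" by simp
  obtain i j where "b i j \<noteq> 0" "(real n2, real m2) = (real i, real j)"
    using is_vertex_support_point second_vertex unfolding next_vertex_def by metis
  then show "b n2 m2 \<noteq> 0" by simp
qed

lemma first_edge_order: "n1 < n2" "m2 < m1"
proof -
  show n12: "n1 < n2" using second_vertex by (simp add: next_vertex_def)
  show "m2 < m1"
  proof (rule ccontr)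
    assume "\<not> m2 < m1"
    then have "\<not> (real n1, real m1) + (real n2 - real n1, real m2 - real m1) extreme_point_of newton_polygon b"
      using not_extreme_point_above[OF support_point_in_newton_polygon[of b, OF first_edge_support(1)],
          of "real n2 - real n1" "real m2 - real m1"] n12
      by simp
    then show False using second_vertex by (simp add: next_vertex_def is_vertex_def)
  qed
qed

lemma first_edge_leftmost:
  assumes "b i j \<noteq> 0"
  shows "n1 \<le> i"
proof -
  obtain i0 j0 where ij0: "b i0 j0 \<noteq> 0" "\<And>i j. b i j \<noteq> 0 \<Longrightarrow> i0 \<le> i"
    "\<And>i j. b i j \<noteq> 0 \<Longrightarrow> i = i0 \<Longrightarrow> j0 \<le> j"
    using support_lexminE[of b i j "\<lambda>i j. i" "\<lambda>i j. j", OF assms] by blast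
  have "(real i0, real j0) extreme_point_of newton_polygon b"
    by (rule lexmin_support_extreme_point[where wa=1 and wb=0 and ga=0 and gb=1]) (use ij0 in auto)
  then have "real n1 \<le> real i0" using first_leftmost by (auto simp: is_vertex_def)
  then show ?thesis using ij0(2)[OF assms] by simp
qed

lemma first_edge_no_point_below:
  assumes W: "W \<in> newton_polygon b" "real n2 \<le> fst W"
    and below: "real (m1-m2) * fst W + real (n2-n1) * snd W < real (m1-m2) * real n1 + real (n2-n1) * real m1"
  shows False
proof -
  define wa wb where "wa = m1 - m2" and "wb = n2 - n1"
  have n12: "n1 < n2" and m12: "m2 < m1" using first_edge_order .
  then have wb: "wb > 0" by (simp add: wb_def)
  have line2: "real wa * real n2 + real wb * real m2 = real wa * real n1 + real wb * real m1"
    using n12 m12 by (simp add: wa_def wb_def of_nat_diff algebra_simps)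
  have V1N: "(real n1, real m1) \<in> newton_polygon b"
    using support_point_in_newton_polygon first_edge_support(1) by auto
  obtain t where t: "0 < t" "t \<le> 1" "fst ((1 - t) *\<^sub>R (real n1, real m1) + t *\<^sub>R W) = real n2"
    using segment_point_with_fst[of "(real n1, real m1)" "real n2" W] n12 W(2) by auto
  define S where "S = (1 - t) *\<^sub>R (real n1, real m1) + t *\<^sub>R W"
  have SN: "S \<in> newton_polygon b"
    unfolding S_def using newton_polygon_closed_segment[OF V1N W(1), of t] t by simp
  have "real wa * fst S + real wb * snd S
      = (1-t) * (real wa * real n1 + real wb * real m1) + t * (real wa * fst W + real wb * snd W)"
    by (simp add: S_def algebra_simps)
  also have "\<dots> < real wa * real n1 + real wb * real m1"
    using mult_strict_left_mono[OF below[folded wa_def wb_def] t(1)] by (simp add: algebra_simps)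
  finally have "real wa * real n2 + real wb * snd S < real wa * real n2 + real wb * real m2"
    using line2 t(3) by (simp add: S_def)
  then have "snd S < real m2" using wb by simp
  moreover have "(real n2, real m2) = S + (0, real m2 - snd S)" using t(3) by (simp add: S_def prod_eq_iff)
  ultimately show False using not_extreme_point_above[OF SN, of 0 "real m2 - snd S"] second_vertex
    by (simp add: next_vertex_def is_vertex_def)
qed

lemma first_edge_weight_ge:
  assumes "b i j \<noteq> 0"
  shows "(m1-m2)*n1 + (n2-n1)*m1 \<le> (m1-m2)*i + (n2-n1)*j"
proof (rule ccontr)
  define wa wb where "wa = m1 - m2" and "wb = n2 - n1"
  have wb: "wb > 0" using first_edge_order by (simp add: wb_def)
  assume "\<not> ?thesis"
  then have below: "wa*i + wb*j < wa*n1 + wb*m1" by (simp add: wa_def wb_def)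
  obtain i1 j1 where ij1: "b i1 j1 \<noteq> 0" "\<And>i j. b i j \<noteq> 0 \<Longrightarrow> wa*i1 + wb*j1 \<le> wa*i + wb*j"
    "\<And>i j. b i j \<noteq> 0 \<Longrightarrow> wa*i + wb*j = wa*i1 + wb*j1 \<Longrightarrow> i1 \<le> i"
    using support_lexminE[of b i j "\<lambda>i j. wa*i + wb*j" "\<lambda>i j. i", OF assms] by blast
  have less: "wa*i1 + wb*j1 < wa*n1 + wb*m1" using ij1(2)[OF assms] below by linarith
  have "(real i1, real j1) extreme_point_of newton_polygon b"
    by (rule lexmin_support_extreme_point[where ga=1 and gb=0]) (use ij1 wb in auto)
  then have vertex1: "is_vertex b (real i1, real j1)" by (simp add: is_vertex_def)
  then have "n1 \<le> i1" using first_leftmost by fastforce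
  have W1N: "(real i1, real j1) \<in> newton_polygon b"
    using support_point_in_newton_polygon ij1(1) by auto
  show False
  proof (cases "i1 = n1")
    case True
    then have "j1 < m1" using less wb by simp
    then have "\<not> (real i1, real j1) + (0, real m1 - real j1) extreme_point_of newton_polygon b"
      using not_extreme_point_above[OF W1N, of 0 "real m1 - real j1"] by simp
    then show False using first_vertex True by (simp add: is_vertex_def)
  next
    case False
    then have "real n2 \<le> real i1"
      using \<open>n1 \<le> i1\<close> second_vertex vertex1 unfolding next_vertex_def by (metis fst_conv le_neq_implies_less of_nat_less_iff)
    moreover have "real (wa*i1 + wb*j1) < real (wa*n1 + wb*m1)" using less by (simp only: of_nat_less_iff)
    ultimately show False
      using first_edge_no_point_below[OF W1N] by (simp add: wa_def wb_def)
  qed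
qed

lemma first_edge_between:
  assumes ij: "b i j \<noteq> 0" and on_line: "(m1-m2)*i + (n2-n1)*j = (m1-m2)*n1 + (n2-n1)*m1"
  shows "i \<le> n2"
proof (rule ccontr)
  define wa wb where "wa = m1 - m2" and "wb = n2 - n1"
  have n12: "n1 < n2" and m12: "m2 < m1" using first_edge_order .
  then have wb: "wb > 0" by (simp add: wb_def)
  have line: "real wa * real i + real wb * real j = real wa * real n1 + real wb * real m1"
    using arg_cong[OF on_line, of real] by (simp add: wa_def wb_def)
  have line2: "real wa * real n2 + real wb * real m2 = real wa * real n1 + real wb * real m1"
    using n12 m12 by (simp add: wa_def wb_def of_nat_diff algebra_simps)
  assume "\<not> i \<le> n2"
  then obtain t where t: "0 < t" "t < 1"
      "fst ((1 - t) *\<^sub>R (real n1, real m1) + t *\<^sub>R (real i, real j)) = real n2"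
    using segment_point_with_fst[of "(real n1, real m1)" "real n2" "(real i, real j)"] n12 by auto
  define S where "S = (1 - t) *\<^sub>R (real n1, real m1) + t *\<^sub>R (real i, real j)"
  have "real wa * fst S + real wb * snd S
      = (1-t) * (real wa * real n1 + real wb * real m1) + t * (real wa * real i + real wb * real j)"
    by (simp add: S_def algebra_simps)
  also have "\<dots> = real wa * real n1 + real wb * real m1" unfolding line by (simp add: algebra_simps)
  finally have "real wa * real n2 + real wb * snd S = real wa * real n2 + real wb * real m2"
    using line2 t(3) by (simp add: S_def)
  then have "S = (real n2, real m2)" using wb t(3) by (simp add: S_def prod_eq_iff)
  moreover have "S \<in> open_segment (real n1, real m1) (real i, real j)"
    unfolding in_segment S_def using t \<open>\<not> i \<le> n2\<close> n12 by auto
  ultimately show False using second_vertex support_point_in_newton_polygon[of b, OF first_edge_support(1)]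
      support_point_in_newton_polygon[of b, OF ij]
    by (auto simp: next_vertex_def is_vertex_def extreme_point_of_def)
qed

lemma lower_edge_first_edge:
  "lower_edge (m1-m2) (n2-n1) b ((m1-m2)*n1 + (n2-n1)*m1) n1 m1 n2 m2"
proof -
  have "(m1-m2)*n2 + (n2-n1)*m2 = (m1-m2)*n1 + (n2-n1)*m1"
    using first_edge_order by (simp add: diff_mult_distrib diff_mult_distrib2 algebra_simps)
  then show ?thesis unfolding lower_edge_def
    using first_edge_weight_ge first_edge_between first_edge_leftmost first_edge_support by auto
qed

end

section \<open>Iterates of the skew product\<close>

lemma lower_edge_coeff_zero:
  "lower_edge wa wb c L x1 y1 x2 y2 \<Longrightarrow> L > 0 \<Longrightarrow> c 0 0 = 0"
  using lower_edge_weight_ge[of wa wb c L x1 y1 x2 y2 0 0] by fastforce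

lemma iterate_expansion:
  assumes p: "has_expansion1 p a" and \<delta>: "\<delta> \<ge> 1" and a_low: "\<forall>i<\<delta>. a i = 0" and a_lead: "a \<delta> \<noteq> 0"
    and wa: "wa > 0" and wb: "wb > 0"
  shows "\<exists>c. has_expansion2 (\<lambda>z w. (p^^n) z) c \<and> lower_edge wa wb c (wa*\<delta>^n) (\<delta>^n) 0 (\<delta>^n) 0"
proof (induction n)
  case 0
  have "lower_edge wa wb (coeff_single 1 0) wa 1 0 1 0"
    using wa by (auto simp: lower_edge_def coeff_single_def)
  then show ?case using has_expansion2_fst by auto
next
  case (Suc n)
  then obtain c where c: "has_expansion2 (\<lambda>z w. (p^^n) z) c" "lower_edge wa wb c (wa*\<delta>^n) (\<delta>^n) 0 (\<delta>^n) 0"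
    by blast
  have c00: "c 0 0 = 0" using lower_edge_coeff_zero[OF c(2)] wa \<delta> by simp
  have lift: "coeff_lift a i j \<noteq> 0 \<longleftrightarrow> j = 0 \<and> a i \<noteq> 0" for i j
    by (simp add: coeff_lift_def)
  have support: "j = 0 \<and> \<delta> \<le> i" if "coeff_lift a i j \<noteq> 0" for i j
    using that a_low lift not_le by blast
  have "has_expansion2 (\<lambda>z w. p ((p^^n) z)) (coeff_subst (coeff_lift a) c c)"
    using has_expansion2_comp[OF has_expansion2_coeff_lift[OF p] c(1) c(1) c00 c00] by simp
  moreover have "lower_edge wa wb (coeff_subst (coeff_lift a) c c) (wa*\<delta>^Suc n) (\<delta>^Suc n) 0 (\<delta>^Suc n) 0"
  proof (rule lower_edge_coeff_subst[OF wb c(2) c(2), where il=\<delta> and jl=0 and ir=\<delta> and jr=0])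
    fix i j assume "coeff_lift a i j \<noteq> 0"
    then have ij: "j = 0" "\<delta> \<le> i" using support by auto
    then show "wa*\<delta>^Suc n \<le> i*(wa*\<delta>^n) + j*(wa*\<delta>^n)"
      using mult_right_mono[OF ij(2), of "wa*\<delta>^n"] by (simp add: algebra_simps)
    assume "i*(wa*\<delta>^n) + j*(wa*\<delta>^n) = wa*\<delta>^Suc n"
    then have "i = \<delta>" using ij wa \<delta> by simp
    then show "\<delta>^Suc n \<le> i*\<delta>^n + j*\<delta>^n \<and> i*\<delta>^n + j*\<delta>^n \<le> \<delta>^Suc n"
      and "(i,j) \<noteq> (\<delta>,0) \<Longrightarrow> \<delta>^Suc n < i*\<delta>^n + j*\<delta>^n"
      and "(i,j) \<noteq> (\<delta>,0) \<Longrightarrow> i*\<delta>^n + j*\<delta>^n < \<delta>^Suc n"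
      using ij by auto
  qed (use a_lead in \<open>simp_all add: coeff_lift_def algebra_simps\<close>)
  ultimately show ?case by auto
qed

lemma Qit_expansion_induct:
  assumes q: "has_expansion2 q b"
    and iter: "\<And>n. \<exists>c. has_expansion2 (\<lambda>z w. (p^^n) z) c \<and> P n c"
    and P_zero: "\<And>n c. P n c \<Longrightarrow> c 0 0 = 0"
    and E_base: "E 1 b"
    and E_zero: "\<And>n c. n \<ge> 1 \<Longrightarrow> E n c \<Longrightarrow> c 0 0 = 0"
    and step: "\<And>n c e. n \<ge> 1 \<Longrightarrow> P n c \<Longrightarrow> E n e \<Longrightarrow> E (Suc n) (coeff_subst b c e)"
    and n: "n \<ge> 1"
  shows "\<exists>e. has_expansion2 (Qit p q n) e \<and> E n e"
  using n
proof (induction n rule: dec_induct)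
  case base
  have "Qit p q 1 = q" by (simp add: fun_eq_iff)
  then show ?case using q E_base by auto
next
  case (step n)
  then obtain e where e: "has_expansion2 (Qit p q n) e" "E n e" by blast
  obtain c where c: "has_expansion2 (\<lambda>z w. (p^^n) z) c" "P n c" using iter by blast
  have "has_expansion2 (\<lambda>z w. q ((p^^n) z) (Qit p q n z w)) (coeff_subst b c e)"
    by (rule has_expansion2_comp[OF q c(1) e(1) P_zero[OF c(2)] E_zero[OF step(1) e(2)]])
  then show ?case using assms(6)[OF step(1) c(2) e(2)] by auto
qed

definition hom_sum :: "nat \<Rightarrow> nat \<Rightarrow> nat \<Rightarrow> nat" where
  "hom_sum x y n = (\<Sum>k<n. x ^ (n - 1 - k) * y ^ k)"

lemma hom_sum_Suc: "hom_sum x y (Suc n) = x ^ n + y * hom_sum x y n"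
proof -
  have "hom_sum x y (Suc n) = (\<Sum>k<Suc n. x ^ (n - k) * y ^ k)" by (simp add: hom_sum_def)
  also have "\<dots> = x ^ (n - 0) * y ^ 0 + (\<Sum>k<n. x ^ (n - Suc k) * y ^ Suc k)"
    by (rule sum.lessThan_Suc_shift)
  also have "(\<Sum>k<n. x ^ (n - Suc k) * y ^ Suc k) = y * (\<Sum>k<n. x ^ (n - 1 - k) * y ^ k)"
    by (simp add: sum_distrib_left algebra_simps)
  finally show ?thesis by (simp add: hom_sum_def)
qed

lemma scaled_weight_eq:
  fixes wa wb A B C i j :: nat
  assumes "wb*A = wa*B + C"
  shows "wb*(i*A + j*B) = i*C + B*(wa*i + wb*j)"
proof -
  have "wb*(i*A + j*B) = i*(wb*A) + B*(wb*j)" by (simp add: algebra_simps)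
  also have "\<dots> = i*C + B*(wa*i + wb*j)" using assms by (simp add: algebra_simps)
  finally show ?thesis .
qed

text \<open>Strict case: up to the factor wb, the weight i (wa E) + j L of the term b_ij after substitution
  is i wa M + L (wa i + wb j) with M > 0, hence uniquely minimal at the first vertex (g,d).\<close>

lemma strict_weight_min:
  fixes wa wb L M E g d i j :: nat
  assumes wa: "wa > 0" and wb: "wb > 0" and L: "L > 0" and M: "M > 0" and E: "wb*E = L + M"
    and i: "g \<le> i" and K: "wa*g + wb*d \<le> wa*i + wb*j"
  shows "g*(wa*E) + d*L \<le> i*(wa*E) + j*L"
    and "g*(wa*E) + d*L = i*(wa*E) + j*L \<Longrightarrow> (i,j) = (g,d)"
proof -
  have E': "wb*(wa*E) = wa*L + wa*M" using arg_cong[OF E, of "(*) wa"] by (simp add: algebra_simps)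
  note eq = scaled_weight_eq[OF E', of g d] scaled_weight_eq[OF E', of i j]
  have le: "g*(wa*M) \<le> i*(wa*M)" "L*(wa*g + wb*d) \<le> L*(wa*i + wb*j)"
    using i K by (simp_all add: mult_right_mono)
  then have "wb*(g*(wa*E) + d*L) \<le> wb*(i*(wa*E) + j*L)" unfolding eq by (rule add_mono)
  then show "g*(wa*E) + d*L \<le> i*(wa*E) + j*L" using wb by simp
  assume "g*(wa*E) + d*L = i*(wa*E) + j*L"
  then have "g*(wa*M) + L*(wa*g + wb*d) = i*(wa*M) + L*(wa*i + wb*j)" by (metis eq)
  then have "g*(wa*M) = i*(wa*M)" "L*(wa*g + wb*d) = L*(wa*i + wb*j)" using le by linarith+
  then have "i = g" "wa*g + wb*d = wa*i + wb*j" using wa M L by simp_all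
  then show "(i,j) = (g,d)" using wb by simp
qed

lemma strict_case_step:
  fixes b :: "nat \<Rightarrow> nat \<Rightarrow> complex" and g d D \<delta> wa wb n :: nat
  assumes wa: "wa > 0" and wb: "wb > 0" and dD: "d = D + wa"
    and leftmost: "\<forall>i j. b i j \<noteq> 0 \<longrightarrow> g \<le> i"
    and weight_ge: "\<forall>i j. b i j \<noteq> 0 \<longrightarrow> wa*g + wb*d \<le> wa*i + wb*j"
    and b0: "b g d \<noteq> 0" and n: "n \<ge> 1"
    and below: "wa*(g*hom_sum \<delta> d n) + wb*d^n < wb*\<delta>^n"
    and P: "lower_edge wa wb c (wa*\<delta>^n) (\<delta>^n) 0 (\<delta>^n) 0"
    and Q: "lower_edge wa wb e (wa*(g*hom_sum \<delta> d n) + wb*d^n)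
      (g*hom_sum \<delta> d n) (d^n) (g*hom_sum \<delta> d n + wb*d^(n-1)) (D*d^(n-1))"
  shows "lower_edge wa wb (coeff_subst b c e) (wa*(g*hom_sum \<delta> d (Suc n)) + wb*d^Suc n)
    (g*hom_sum \<delta> d (Suc n)) (d^Suc n) (g*hom_sum \<delta> d (Suc n) + wb*d^(Suc n - 1)) (D*d^(Suc n - 1))"
proof -
  define E G L where "E = \<delta>^n" and "G = g*hom_sum \<delta> d n" and "L = wa*G + wb*d^n"
  have "L < wb*E" using below by (simp add: E_def G_def L_def)
  then obtain M where M: "wb*E = L + M" "M > 0" using less_imp_add_positive by metis
  have L: "L > 0" using dD wa wb by (simp add: L_def)
  have edge: "lower_edge wa wb (coeff_subst b c e) (g*(wa*E) + d*L)
      (g*E + d*G) (g*0 + d*d^n) (g*E + d*(G + wb*d^(n-1))) (g*0 + d*(D*d^(n-1)))"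
  proof (rule lower_edge_coeff_subst_single[OF wb P[folded E_def] Q[folded G_def L_def], of b g d])
    fix i j assume "b i j \<noteq> 0"
    then have "g \<le> i" "wa*g + wb*d \<le> wa*i + wb*j" using leftmost weight_ge by auto
    note min = strict_weight_min[OF wa wb L M(2,1) this]
    show "g*(wa*E) + d*L \<le> i*(wa*E) + j*L" by (rule min(1))
    show "i*(wa*E) + j*L = g*(wa*E) + d*L \<Longrightarrow> (i,j) = (g,d)" using min(2) by simp
  qed (use b0 in simp_all)
  have shift: "d*(wb*d^(n-1)) = wb*d^(Suc n - 1)" "d*(D*d^(n-1)) = D*d^(Suc n - 1)"
    using n by (cases n; simp add: ac_simps)+
  have "g*E + d*G = g*hom_sum \<delta> d (Suc n)"
    and "g*(wa*E) + d*L = wa*(g*hom_sum \<delta> d (Suc n)) + wb*d^Suc n"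
    and "g*E + d*(G + wb*d^(n-1)) = (g*E + d*G) + d*(wb*d^(n-1))"
    by (simp_all add: hom_sum_Suc E_def G_def L_def algebra_simps)
  then show ?thesis using edge by (simp only: shift mult_0_right add_0 power_Suc)
qed

lemma strict_case_below:
  assumes d: "d \<ge> 1" and K: "wa*g + wb*d < wb*\<delta>" and n: "n \<ge> 1"
  shows "wa*(g*hom_sum \<delta> d n) + wb*d^n < wb*\<delta>^n"
  using n
proof (induction n rule: dec_induct)
  case base
  then show ?case using K by (simp add: hom_sum_def)
next
  case (step n)
  have "\<delta> > 0" using K by (cases "\<delta> = 0") auto
  have "wa*(g*hom_sum \<delta> d (Suc n)) + wb*d^Suc n = g*wa*\<delta>^n + d*(wa*(g*hom_sum \<delta> d n) + wb*d^n)"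
    by (simp add: hom_sum_Suc algebra_simps)
  also have "\<dots> < g*wa*\<delta>^n + d*(wb*\<delta>^n)" using step.IH d by simp
  also have "\<dots> = \<delta>^n * (wa*g + wb*d)" by (simp add: algebra_simps)
  also have "\<dots> < \<delta>^n * (wb*\<delta>)" using K \<open>\<delta> > 0\<close> by simp
  also have "\<dots> = wb*\<delta>^Suc n" by (simp add: algebra_simps)
  finally show ?case .
qed

text \<open>Critical case: all terms of b on its first edge keep the minimal weight, and along that edge
  the endpoint functionals increase with i, so the new edge runs between the images of (g,d)
  and (C,D).\<close>

lemma line_functional_mono:
  fixes wa wb E G Y K i j i' j' :: nat
  assumes wb: "wb > 0" and Y: "Y > 0" and eq: "wb*E = wa*G + wb*Y"
    and on_line: "wa*i + wb*j = K" "wa*i' + wb*j' = K"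
  shows "i*E + j*G \<le> i'*E + j'*G \<longleftrightarrow> i \<le> i'" and "i*E + j*G < i'*E + j'*G \<longleftrightarrow> i < i'"
proof -
  have eqs: "wb*(i*E + j*G) = i*(wb*Y) + G*K" "wb*(i'*E + j'*G) = i'*(wb*Y) + G*K"
    using scaled_weight_eq[OF eq] on_line by auto
  have "i*E + j*G \<le> i'*E + j'*G \<longleftrightarrow> wb*(i*E + j*G) \<le> wb*(i'*E + j'*G)" using wb by simp
  also have "\<dots> \<longleftrightarrow> i \<le> i'" unfolding eqs using wb Y by simp
  finally show "i*E + j*G \<le> i'*E + j'*G \<longleftrightarrow> i \<le> i'" .
  have "i*E + j*G < i'*E + j'*G \<longleftrightarrow> wb*(i*E + j*G) < wb*(i'*E + j'*G)" using wb by simp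
  also have "\<dots> \<longleftrightarrow> i < i'" unfolding eqs using wb Y by simp
  finally show "i*E + j*G < i'*E + j'*G \<longleftrightarrow> i < i'" .
qed

lemma critical_case_step:
  fixes b :: "nat \<Rightarrow> nat \<Rightarrow> complex" and g d C D \<delta> wa wb n :: nat
  assumes wa: "wa > 0" and wb: "wb > 0" and D0: "D > 0" and d0: "d > 0"
    and K2: "wa*C + wb*D = wa*g + wb*d"
    and leftmost: "\<forall>i j. b i j \<noteq> 0 \<longrightarrow> g \<le> i"
    and weight_ge: "\<forall>i j. b i j \<noteq> 0 \<longrightarrow> wa*g + wb*d \<le> wa*i + wb*j"
    and rightmost: "\<forall>i j. b i j \<noteq> 0 \<and> wa*i + wb*j = wa*g + wb*d \<longrightarrow> i \<le> C"
    and b0: "b g d \<noteq> 0" and b1: "b C D \<noteq> 0"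
    and critical: "wa*g + wb*d = wb*\<delta>"
    and P: "lower_edge wa wb c (wa*\<delta>^n) (\<delta>^n) 0 (\<delta>^n) 0"
    and Q: "lower_edge wa wb e (wb*\<delta>^n) (g*hom_sum \<delta> d n) (d^n) (C*hom_sum \<delta> D n) (D^n)"
  shows "lower_edge wa wb (coeff_subst b c e) (wb*\<delta>^Suc n)
    (g*hom_sum \<delta> d (Suc n)) (d^Suc n) (C*hom_sum \<delta> D (Suc n)) (D^Suc n)"
proof -
  define E G X K where "E = \<delta>^n" and "G = g*hom_sum \<delta> d n" and "X = C*hom_sum \<delta> D n"
    and "K = wa*g + wb*d"
  have "wb*\<delta> > 0" using critical wb d0 by (metis add_gr_0 mult_pos_pos)
  then have E: "E > 0" by (simp add: E_def)
  have eqG: "wb*E = wa*G + wb*d^n" and eqX: "wb*E = wa*X + wb*D^n"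
    using lower_edge_ends(1,2)[OF Q] by (simp_all add: E_def G_def X_def)
  have weight: "i*(wa*E) + j*(wb*E) = E*(wa*i + wb*j)" for i j by (simp add: algebra_simps)
  have on_line: "wa*i + wb*j = K \<and> g \<le> i \<and> i \<le> C" if "b i j \<noteq> 0" "i*(wa*E) + j*(wb*E) = E*K" for i j
  proof -
    have "wa*i + wb*j = K" using that(2) E by (simp add: weight)
    then show ?thesis using that(1) leftmost rightmost by (auto simp: K_def)
  qed
  note left = line_functional_mono[OF wb _ eqG, where K=K] and right = line_functional_mono[OF wb _ eqX, where K=K]
  have "lower_edge wa wb (coeff_subst b c e) (E*K) (g*E + d*G) (g*0 + d*d^n) (C*E + D*X) (C*0 + D*D^n)"
  proof (rule lower_edge_coeff_subst[OF wb P[folded E_def] Q[folded E_def G_def X_def]])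
    fix i j assume ij: "b i j \<noteq> 0"
    show "E*K \<le> i*(wa*E) + j*(wb*E)" using weight_ge ij by (simp add: weight K_def)
    assume "i*(wa*E) + j*(wb*E) = E*K"
    then have ij': "wa*i + wb*j = K" "g \<le> i" "i \<le> C" using on_line ij by auto
    have g: "wa*g + wb*d = K" and C: "wa*C + wb*D = K" using K2 by (simp_all add: K_def)
    show "g*E + d*G \<le> i*E + j*G \<and> i*E + j*X \<le> C*E + D*X"
      using left(1)[OF _ g ij'(1)] right(1)[OF _ ij'(1) C] ij' d0 D0 by simp
    show "g*E + d*G < i*E + j*G" if "(i,j) \<noteq> (g,d)"
      using left(2)[OF _ g ij'(1)] ij' that g wb d0 by (cases "i = g") auto
    show "i*E + j*X < C*E + D*X" if "(i,j) \<noteq> (C,D)"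
      using right(2)[OF _ ij'(1) C] ij' that C wb D0 by (cases "i = C") auto
  qed (use b0 b1 K2 in \<open>simp_all add: weight K_def\<close>)
  moreover have "E*K = wb*\<delta>^Suc n" "g*E + d*G = g*hom_sum \<delta> d (Suc n)" "g*0 + d*d^n = d^Suc n"
    "C*E + D*X = C*hom_sum \<delta> D (Suc n)" "C*0 + D*D^n = D^Suc n"
    using critical by (simp_all add: hom_sum_Suc E_def G_def X_def K_def algebra_simps)
  ultimately show ?thesis by (simp only:)
qed

context
  fixes p :: "complex \<Rightarrow> complex" and q :: "complex \<Rightarrow> complex \<Rightarrow> complex"
    and a :: "nat \<Rightarrow> complex" and b :: "nat \<Rightarrow> nat \<Rightarrow> complex"
    and \<delta> n1 m1 n2 m2 :: nat
  assumes p_exp: "has_expansion1 p a" and \<delta>_pos: "\<delta> \<ge> 1"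
    and a_low: "\<forall>i<\<delta>. a i = 0" and a_lead: "a \<delta> \<noteq> 0"
    and q_exp: "has_expansion2 q b"
    and v1: "is_vertex b (real n1, real m1)"
    and v1_first: "\<forall>R. is_vertex b R \<longrightarrow> real n1 \<le> fst R"
    and v2: "next_vertex b (real n1, real m1) (real n2, real m2)"
begin

lemma strict_case_edge:
  assumes strict: "(m1-m2)*n1 + (n2-n1)*m1 < (n2-n1)*\<delta>" and n: "n \<ge> 1"
  shows "lower_edge (m1-m2) (n2-n1) (coeffs2 (Qit p q n)) ((m1-m2)*(n1*hom_sum \<delta> m1 n) + (n2-n1)*m1^n)
    (n1*hom_sum \<delta> m1 n) (m1^n) (n1*hom_sum \<delta> m1 n + (n2-n1)*m1^(n-1)) (m2*m1^(n-1))"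
proof -
  define wa wb where "wa = m1 - m2" and "wb = n2 - n1"
  note order = first_edge_order[OF v1 v1_first v2]
  have wa: "wa > 0" and wb: "wb > 0" and m1: "m1 = m2 + wa" and n2: "n2 = n1 + wb"
    using order by (auto simp: wa_def wb_def)
  note edge = lower_edge_first_edge[OF v1 v1_first v2, folded wa_def wb_def]
  have leftmost: "\<forall>i j. b i j \<noteq> 0 \<longrightarrow> n1 \<le> i" using first_edge_leftmost[OF v1 v1_first v2] by blast
  have weight_ge: "\<forall>i j. b i j \<noteq> 0 \<longrightarrow> wa*n1 + wb*m1 \<le> wa*i + wb*j"
    using lower_edge_weight_ge[OF edge] by blast
  have "\<exists>e. has_expansion2 (Qit p q n) e \<and> lower_edge wa wb e (wa*(n1*hom_sum \<delta> m1 n) + wb*m1^n)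
      (n1*hom_sum \<delta> m1 n) (m1^n) (n1*hom_sum \<delta> m1 n + wb*m1^(n-1)) (m2*m1^(n-1))"
  proof (rule Qit_expansion_induct[OF q_exp iterate_expansion[OF p_exp \<delta>_pos a_low a_lead wa wb] _ _ _ _ n])
    show "c 0 0 = 0" if "lower_edge wa wb c (wa*\<delta>^k) (\<delta>^k) 0 (\<delta>^k) 0" for k c
      using lower_edge_coeff_zero[OF that] wa \<delta>_pos by simp
    show "lower_edge wa wb b (wa*(n1*hom_sum \<delta> m1 1) + wb*m1^1) (n1*hom_sum \<delta> m1 1) (m1^1)
        (n1*hom_sum \<delta> m1 1 + wb*m1^(1-1)) (m2*m1^(1-1))"
      using edge n2 by (simp add: hom_sum_def)
    show "e 0 0 = 0" if "k \<ge> 1" and "lower_edge wa wb e (wa*(n1*hom_sum \<delta> m1 k) + wb*m1^k)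
        (n1*hom_sum \<delta> m1 k) (m1^k) (n1*hom_sum \<delta> m1 k + wb*m1^(k-1)) (m2*m1^(k-1))" for k e
      using lower_edge_coeff_zero[OF that(2)] wa wb m1 by simp
    fix k c e assume k: "k \<ge> 1" and c: "lower_edge wa wb c (wa*\<delta>^k) (\<delta>^k) 0 (\<delta>^k) 0"
      and e: "lower_edge wa wb e (wa*(n1*hom_sum \<delta> m1 k) + wb*m1^k) (n1*hom_sum \<delta> m1 k) (m1^k)
        (n1*hom_sum \<delta> m1 k + wb*m1^(k-1)) (m2*m1^(k-1))"
    have "m1 \<ge> 1" using m1 wa by simp
    then have below: "wa*(n1*hom_sum \<delta> m1 k) + wb*m1^k < wb*\<delta>^k"
      using strict_case_below[OF _ strict[folded wa_def wb_def] k] by (simp add: mult.commute)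
    show "lower_edge wa wb (coeff_subst b c e) (wa*(n1*hom_sum \<delta> m1 (Suc k)) + wb*m1^Suc k)
        (n1*hom_sum \<delta> m1 (Suc k)) (m1^Suc k) (n1*hom_sum \<delta> m1 (Suc k) + wb*m1^(Suc k-1)) (m2*m1^(Suc k-1))"
      using strict_case_step[OF wa wb m1 leftmost weight_ge lower_edge_ends(3)[OF edge] k below c e] by simp
  qed
  then show ?thesis using coeffs2_eqI by (auto simp: wa_def wb_def)
qed

lemma critical_case_edge:
  assumes critical: "(m1-m2)*n1 + (n2-n1)*m1 = (n2-n1)*\<delta>" and m2: "m2 > 0" and n: "n \<ge> 1"
  shows "lower_edge (m1-m2) (n2-n1) (coeffs2 (Qit p q n)) ((n2-n1)*\<delta>^n)
    (n1*hom_sum \<delta> m1 n) (m1^n) (n2*hom_sum \<delta> m2 n) (m2^n)"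
proof -
  define wa wb where "wa = m1 - m2" and "wb = n2 - n1"
  note order = first_edge_order[OF v1 v1_first v2]
  have wa: "wa > 0" and wb: "wb > 0" and m1: "m1 > 0" using order by (auto simp: wa_def wb_def)
  note edge = lower_edge_first_edge[OF v1 v1_first v2, folded wa_def wb_def]
  have leftmost: "\<forall>i j. b i j \<noteq> 0 \<longrightarrow> n1 \<le> i" using first_edge_leftmost[OF v1 v1_first v2] by blast
  have weight_ge: "\<forall>i j. b i j \<noteq> 0 \<longrightarrow> wa*n1 + wb*m1 \<le> wa*i + wb*j"
    using lower_edge_weight_ge[OF edge] by blast
  have between: "\<forall>i j. b i j \<noteq> 0 \<and> wa*i + wb*j = wa*n1 + wb*m1 \<longrightarrow> i \<le> n2"
    using lower_edge_between[OF edge] by blast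
  note crit = critical[folded wa_def wb_def]
  have "\<exists>e. has_expansion2 (Qit p q n) e \<and> lower_edge wa wb e (wb*\<delta>^n)
      (n1*hom_sum \<delta> m1 n) (m1^n) (n2*hom_sum \<delta> m2 n) (m2^n)"
  proof (rule Qit_expansion_induct[OF q_exp iterate_expansion[OF p_exp \<delta>_pos a_low a_lead wa wb] _ _ _ _ n])
    show "c 0 0 = 0" if "lower_edge wa wb c (wa*\<delta>^k) (\<delta>^k) 0 (\<delta>^k) 0" for k c
      using lower_edge_coeff_zero[OF that] wa \<delta>_pos by simp
    show "lower_edge wa wb b (wb*\<delta>^1) (n1*hom_sum \<delta> m1 1) (m1^1) (n2*hom_sum \<delta> m2 1) (m2^1)"
      using edge[unfolded crit] by (simp add: hom_sum_def)
    show "e 0 0 = 0" if "k \<ge> 1" and "lower_edge wa wb e (wb*\<delta>^k)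
        (n1*hom_sum \<delta> m1 k) (m1^k) (n2*hom_sum \<delta> m2 k) (m2^k)" for k e
      using lower_edge_coeff_zero[OF that(2)] wb \<delta>_pos by simp
    fix k c e assume "k \<ge> 1" and c: "lower_edge wa wb c (wa*\<delta>^k) (\<delta>^k) 0 (\<delta>^k) 0"
      and e: "lower_edge wa wb e (wb*\<delta>^k) (n1*hom_sum \<delta> m1 k) (m1^k) (n2*hom_sum \<delta> m2 k) (m2^k)"
    show "lower_edge wa wb (coeff_subst b c e) (wb*\<delta>^Suc k)
        (n1*hom_sum \<delta> m1 (Suc k)) (m1^Suc k) (n2*hom_sum \<delta> m2 (Suc k)) (m2^Suc k)"
      by (rule critical_case_step[OF wa wb m2 m1 lower_edge_ends(2)[OF edge]
          leftmost weight_ge between lower_edge_ends(3,4)[OF edge] crit c e])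
  qed
  then show ?thesis using coeffs2_eqI by (auto simp: wa_def wb_def)
qed

lemma real_hom_sum: "real (hom_sum x y n) = (\<Sum>k<n. real x ^ (n - 1 - k) * real y ^ k)"
  by (simp add: hom_sum_def)

lemma first_edge_slope: "- 1 / ((real n2 - real n1) / (real m1 - real m2)) = - (real (m1-m2) / real (n2-n1))"
  using first_edge_order[OF v1 v1_first v2] by (auto simp: of_nat_diff field_simps)

lemma first_edge_yint:
  "yint (real n1, real m1) (real n2, real m2) = real ((m1-m2)*n1 + (n2-n1)*m1) / real (n2-n1)"
  using yint_lower_edge[OF _ _ lower_edge_first_edge[OF v1 v1_first v2]] first_edge_order[OF v1 v1_first v2]
  by simp

lemma strict_case_vertex:
  assumes strict: "yint (real n1, real m1) (real n2, real m2) < real \<delta>" and n: "n \<ge> 1"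
  shows "let \<gamma>n = real n1 * (\<Sum>k<n. real \<delta> ^ (n - 1 - k) * real m1 ^ k);
          P = (\<gamma>n, real m1 ^ n);
          Qv = (\<gamma>n - (real n1 - real n2) * real m1 ^ (n - 1), real m2 * real m1 ^ (n - 1))
      in next_vertex (coeffs2 (Qit p q n)) P Qv
         \<and> slope P Qv = - 1 / ((real n2 - real n1) / (real m1 - real m2))
         \<and> real \<delta> ^ n > yint P Qv"
proof -
  define wa wb where "wa = m1 - m2" and "wb = n2 - n1"
  note order = first_edge_order[OF v1 v1_first v2]
  have wa: "wa > 0" and wb: "wb > 0" and m1: "m1 = m2 + wa" and n2: "real n2 = real n1 + real wb"
    using order by (auto simp: wa_def wb_def)
  have "real (wa*n1 + wb*m1) < real (wb*\<delta>)"
    using strict wb unfolding first_edge_yint by (simp add: wa_def wb_def field_simps)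
  then have strict': "wa*n1 + wb*m1 < wb*\<delta>" by (simp only: of_nat_less_iff)
  note e = strict_case_edge[OF strict'[unfolded wa_def wb_def] n, folded wa_def wb_def]
  have "m2 * m1^(n-1) < m1^n" using n order by (cases n) auto
  note vertex = lower_edge_next_vertex[OF wa wb e lower_edge_fst_less[OF wa wb e this]]
    and slope = slope_lower_edge[OF wa wb e this] and yint = yint_lower_edge[OF wa wb e this]
  have "wa*(n1*hom_sum \<delta> m1 n) + wb*m1^n < wb*\<delta>^n"
    using strict_case_below[OF _ strict' n] m1 wa by simp
  then have "real (wa*(n1*hom_sum \<delta> m1 n) + wb*m1^n) < real (wb*\<delta>^n)" by (simp only: of_nat_less_iff)
  then have "real (wa*(n1*hom_sum \<delta> m1 n) + wb*m1^n) / real wb < real \<delta> ^ n"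
    using wb by (simp add: field_simps)
  moreover have "real (n1*hom_sum \<delta> m1 n + wb*m1^(n-1))
      = real (n1*hom_sum \<delta> m1 n) - (real n1 - real n2) * real m1 ^ (n - 1)"
    using n2 by (simp add: algebra_simps)
  moreover have "real (n1*hom_sum \<delta> m1 n) = real n1 * (\<Sum>k<n. real \<delta> ^ (n - 1 - k) * real m1 ^ k)"
    "real (m1^n) = real m1 ^ n" "real (m2*m1^(n-1)) = real m2 * real m1 ^ (n - 1)"
    by (simp_all add: real_hom_sum)
  ultimately show ?thesis
    using vertex slope yint first_edge_slope[folded wa_def wb_def] unfolding Let_def by (simp only:)
qed

lemma critical_case_vertex:
  assumes critical: "real \<delta> = yint (real n1, real m1) (real n2, real m2)" and m2: "m2 > 0" and n: "n \<ge> 1"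
  shows "let \<gamma>n = real n1 * (\<Sum>k<n. real \<delta> ^ (n - 1 - k) * real m1 ^ k);
          P = (\<gamma>n, real m1 ^ n);
          Qv = ((\<Sum>k<n. real \<delta> ^ (n - 1 - k) * real m2 ^ k) * real n2, real m2 ^ n)
      in next_vertex (coeffs2 (Qit p q n)) P Qv
         \<and> slope P Qv = - 1 / ((real n2 - real n1) / (real m1 - real m2))
         \<and> real \<delta> ^ n = yint P Qv"
proof -
  define wa wb where "wa = m1 - m2" and "wb = n2 - n1"
  note order = first_edge_order[OF v1 v1_first v2]
  have wa: "wa > 0" and wb: "wb > 0" using order by (auto simp: wa_def wb_def)
  have "real (wa*n1 + wb*m1) = real (wb*\<delta>)"
    using critical wb unfolding first_edge_yint by (simp add: wa_def wb_def field_simps)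
  then have critical': "wa*n1 + wb*m1 = wb*\<delta>" by (simp only: of_nat_eq_iff)
  note e = critical_case_edge[OF critical'[unfolded wa_def wb_def] m2 n, folded wa_def wb_def]
  have "m2^n < m1^n" using n order by (simp add: power_strict_mono)
  note vertex = lower_edge_next_vertex[OF wa wb e lower_edge_fst_less[OF wa wb e this]]
    and slope = slope_lower_edge[OF wa wb e this] and yint = yint_lower_edge[OF wa wb e this]
  have "real (wb*\<delta>^n) / real wb = real \<delta> ^ n" using wb by simp
  moreover have "real (n1*hom_sum \<delta> m1 n) = real n1 * (\<Sum>k<n. real \<delta> ^ (n - 1 - k) * real m1 ^ k)"
    "real (n2*hom_sum \<delta> m2 n) = (\<Sum>k<n. real \<delta> ^ (n - 1 - k) * real m2 ^ k) * real n2"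
    "real (m1^n) = real m1 ^ n" "real (m2^n) = real m2 ^ n"
    by (simp_all add: real_hom_sum mult.commute)
  ultimately show ?thesis
    using vertex slope yint first_edge_slope[folded wa_def wb_def] unfolding Let_def by (simp only:)
qed

end

theorem proposition5:
  fixes p :: "complex \<Rightarrow> complex" and q :: "complex \<Rightarrow> complex \<Rightarrow> complex"
    and a :: "nat \<Rightarrow> complex" and b :: "nat \<Rightarrow> nat \<Rightarrow> complex"
    and \<delta> n1 m1 n2 m2 :: nat
  assumes p_exp: "has_expansion1 p a"
    and \<delta>_pos: "\<delta> \<ge> 1"
    and a_low: "\<forall>i<\<delta>. a i = 0" and a_lead: "a \<delta> \<noteq> 0"
    and q_exp: "has_expansion2 q b"
    and b00: "b 0 0 = 0"
    and q_nonzero: "\<exists>i j. b i j \<noteq> 0"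
    and v1: "is_vertex b (real n1, real m1)"
    and v1_first: "\<forall>R. is_vertex b R \<longrightarrow> real n1 \<le> fst R"
    and v2: "next_vertex b (real n1, real m1) (real n2, real m2)"
    and case3: "yint (real n1, real m1) (real n2, real m2) \<le> real \<delta>"
  defines "\<gamma> \<equiv> real n1" and "d \<equiv> real m1" and "C \<equiv> real n2" and "D \<equiv> real m2"
    and "T1 \<equiv> yint (real n1, real m1) (real n2, real m2)"
    and "l2 \<equiv> (real n2 - real n1) / (real m1 - real m2)"
  shows
   "(real \<delta> > T1 \<longrightarrow> (\<forall>n\<ge>1.
      let \<gamma>n = \<gamma> * (\<Sum>k<n. real \<delta> ^ (n - 1 - k) * d ^ k);
          P = (\<gamma>n, d ^ n);
          Qv = (\<gamma>n - (\<gamma> - C) * d ^ (n - 1), D * d ^ (n - 1))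
      in next_vertex (coeffs2 (Qit p q n)) P Qv \<and> slope P Qv = - 1 / l2
         \<and> real \<delta> ^ n > yint P Qv))
  \<and> (real \<delta> = T1 \<and> m2 > 0 \<longrightarrow> (\<forall>n\<ge>1.
      let \<gamma>n = \<gamma> * (\<Sum>k<n. real \<delta> ^ (n - 1 - k) * d ^ k);
          P = (\<gamma>n, d ^ n);
          Qv = ((\<Sum>k<n. real \<delta> ^ (n - 1 - k) * D ^ k) * C, D ^ n)
      in next_vertex (coeffs2 (Qit p q n)) P Qv \<and> slope P Qv = - 1 / l2
         \<and> real \<delta> ^ n = yint P Qv))"
proof -
  note first_edge = p_exp \<delta>_pos a_low a_lead q_exp v1 v1_first v2
  show ?thesis
    using strict_case_vertex[OF first_edge] critical_case_vertex[OF first_edge]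
    unfolding \<gamma>_def d_def C_def D_def T1_def l2_def by blast
qed

end
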